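(* Let $K$ be a differential field of characteristic $0$ with $m$ commuting derivations, $x=(x_1,\dots,x_n)$, and let $\Lambda$ be a characteristic set of a prime differential ideal $P\subseteq K\{x\}$. If $\Lambda\subseteq K\{x\}_{\le r}$, then $$P\cap K\{x\}_{\le r}=(\Lambda^{(r)}):H_\Lambda^\infty,$$ where $(\Lambda^{(r)})$ is the ideal generated by $\Lambda^{(r)}$ in $K\{x\}_{\le r}$ and $(\Lambda^{(r)}):H_\Lambda^\infty=\{f\in K\{x\}_{\le r}: H_\Lambda^\ell f\in(\Lambda^{(r)})\text{ for some }\ell\ge0\}$.
   Context: $K\{x\}$ is the differential polynomial ring in $x$ over $K$, a polynomial ring in the indeterminates $\delta^\xi x_i$, $\xi\in\mathbb N^m$, $\delta^\xi=\delta_1^{\xi_1}\cdots\delta_m^{\xi_m}$, ordered by $\delta^\xi x_i<\delta^\zeta x_j$ iff $(\sum\xi_k,i,\xi_1,\dots,\xi_m)<(\sum\zeta_k,j,\zeta_1,\dots,\zeta_m)$ lexicographically. $K\{x\}_{\le r}$ is the polynomial subring in the $\delta^\xi x_i$ with $|\xi|\le r$. For nonconstant $f$: leader $v_f$ = highest indeterminate occurring, $d_f$ = degree of $f$ in $v_f$, rank $(v_f,d_f)$ ordered lexicographically, separant $S_f=\partial f/\partial v_f$, initial $I_f$ = leading coefficient in $v_f$; $H_\Lambda=\prod_{f\in\Lambda}I_fS_f$. $g$ is reduced w.r.t. $f$ if no proper derivative of $v_f$ occurs in $g$ and $\deg_{v_f}g<d_f$. $\Lambda$ is autoreduced if any two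 distinct elements are reduced w.r.t. each other (finite, listed by nondecreasing rank); $\{g_1..g_r\}<\{f_1..f_s\}$ iff for some $i\le r,s$ ranks agree below $i$ and $\mathrm{rk}\,g_i<\mathrm{rk}\,f_i$, or $r>s$ and ranks agree up to $s$. A characteristic set of $P$ is a minimal autoreduced subset of $P$ for this order. $\Lambda^{(r)}$ is the set of all $\delta^\xi f$ of order at most $r$ with $f\in\Lambda$. *)

theory Defs
  imports Main "HOL-Library.Poly_Mapping"
begin

definition is_derivation :: "('k::field \<Rightarrow> 'k) \<Rightarrow> bool" where
  "is_derivation d \<longleftrightarrow> (\<forall>a b. d (a + b) = d a + d b) \<and> (\<forall>a b. d (a * b) = a * d b + d a * b)"

definition diff_field :: "nat \<Rightarrow> (nat \<Rightarrow> 'k::field \<Rightarrow> 'k) \<Rightarrow> bool" where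
  "diff_field m D \<longleftrightarrow> (\<forall>k<m. is_derivation (D k)) \<and>
     (\<forall>k<m. \<forall>l<m. \<forall>a. D k (D l a) = D l (D k a))"

text \<open>The indeterminate \<delta>^\<xi> x_i is represented by the pair (i, \<xi>), where \<xi> is a list of
  length m (the exponent vector) and i < n (variables indexed from 0).\<close>

type_synonym dvar = "nat \<times> nat list"
type_synonym 'k dpoly = "(dvar \<Rightarrow>\<^sub>0 nat) \<Rightarrow>\<^sub>0 'k"

definition valid_var :: "nat \<Rightarrow> nat \<Rightarrow> dvar \<Rightarrow> bool" where
  "valid_var n m v \<longleftrightarrow> fst v < n \<and> length (snd v) = m"

definition vars :: "'k::zero dpoly \<Rightarrow> dvar set" where
  "vars f = (\<Union>M\<in>Poly_Mapping.keys f. Poly_Mapping.keys (M::dvar \<Rightarrow>\<^sub>0 nat))"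

definition Kx :: "nat \<Rightarrow> nat \<Rightarrow> 'k::zero dpoly set" where
  "Kx n m = {f. \<forall>v\<in>vars f. valid_var n m v}"

definition Kx_le :: "nat \<Rightarrow> nat \<Rightarrow> nat \<Rightarrow> 'k::zero dpoly set" where
  "Kx_le n m r = {f. \<forall>v\<in>vars f. valid_var n m v \<and> sum_list (snd v) \<le> r}"

text \<open>Derivation \<delta>_k on K{x}: extends D k on coefficients and maps \<delta>^\<xi> x_i to
  \<delta>^(\<xi>+e_k) x_i.\<close>
definition shift_var :: "nat \<Rightarrow> dvar \<Rightarrow> dvar" where
  "shift_var k v = (fst v, (snd v)[k := snd v ! k + 1])"

definition deriv_poly :: "(nat \<Rightarrow> 'k::comm_ring_1 \<Rightarrow> 'k) \<Rightarrow> nat \<Rightarrow> 'k dpoly \<Rightarrow> 'k dpoly" where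
  "deriv_poly D k f =
     (\<Sum>M\<in>Poly_Mapping.keys f. Poly_Mapping.single M (D k (Poly_Mapping.lookup f M)) +
        (\<Sum>v\<in>Poly_Mapping.keys M. Poly_Mapping.single (M - Poly_Mapping.single v 1 + Poly_Mapping.single (shift_var k v) 1)
                          (of_nat (Poly_Mapping.lookup M v) * Poly_Mapping.lookup f M)))"

definition dpow :: "(nat \<Rightarrow> 'k::comm_ring_1 \<Rightarrow> 'k) \<Rightarrow> nat list \<Rightarrow> 'k dpoly \<Rightarrow> 'k dpoly" where
  "dpow D \<xi> f = foldr (\<lambda>k g. (deriv_poly D k ^^ (\<xi> ! k)) g) [0..<length \<xi>] f"

definition var_less :: "dvar \<Rightarrow> dvar \<Rightarrow> bool" where
  "var_less v w \<longleftrightarrow>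
     sum_list (snd v) < sum_list (snd w) \<or>
     (sum_list (snd v) = sum_list (snd w) \<and>
       (fst v < fst w \<or> (fst v = fst w \<and> (snd v, snd w) \<in> lex {(a, b). (a::nat) < b})))"

definition nonconstant :: "'k::zero dpoly \<Rightarrow> bool" where
  "nonconstant f \<longleftrightarrow> vars f \<noteq> {}"

definition leader :: "'k::zero dpoly \<Rightarrow> dvar" where
  "leader f = (THE v. v \<in> vars f \<and> (\<forall>w\<in>vars f. w \<noteq> v \<longrightarrow> var_less w v))"

definition deg_in :: "dvar \<Rightarrow> 'k::zero dpoly \<Rightarrow> nat" where
  "deg_in v f = Max (insert 0 ((\<lambda>M. Poly_Mapping.lookup M v) ` Poly_Mapping.keys f))"

definition rank :: "'k::zero dpoly \<Rightarrow> dvar \<times> nat" where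
  "rank f = (leader f, deg_in (leader f) f)"

definition rank_less :: "dvar \<times> nat \<Rightarrow> dvar \<times> nat \<Rightarrow> bool" where
  "rank_less a b \<longleftrightarrow> var_less (fst a) (fst b) \<or> (fst a = fst b \<and> snd a < snd b)"

definition coeff_in :: "dvar \<Rightarrow> nat \<Rightarrow> 'k::comm_ring_1 dpoly \<Rightarrow> 'k dpoly" where
  "coeff_in v d f =
     (\<Sum>M\<in>{M\<in>Poly_Mapping.keys f. Poly_Mapping.lookup M v = d}. Poly_Mapping.single (M - Poly_Mapping.single v d) (Poly_Mapping.lookup f M))"

definition pderiv_var :: "dvar \<Rightarrow> 'k::comm_ring_1 dpoly \<Rightarrow> 'k dpoly" where
  "pderiv_var v f =
     (\<Sum>M\<in>Poly_Mapping.keys f. Poly_Mapping.single (M - Poly_Mapping.single v 1) (of_nat (Poly_Mapping.lookup M v) * Poly_Mapping.lookup f M))"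

definition initial :: "'k::comm_ring_1 dpoly \<Rightarrow> 'k dpoly" where
  "initial f = coeff_in (leader f) (deg_in (leader f) f) f"

definition separant :: "'k::comm_ring_1 dpoly \<Rightarrow> 'k dpoly" where
  "separant f = pderiv_var (leader f) f"

definition proper_deriv_of :: "dvar \<Rightarrow> dvar \<Rightarrow> bool" where
  "proper_deriv_of w v \<longleftrightarrow> fst w = fst v \<and> length (snd w) = length (snd v) \<and>
     (\<forall>k<length (snd v). snd v ! k \<le> snd w ! k) \<and> snd w \<noteq> snd v"

definition reduced_wrt :: "'k::zero dpoly \<Rightarrow> 'k dpoly \<Rightarrow> bool" where
  "reduced_wrt g f \<longleftrightarrow> (\<forall>w\<in>vars g. \<not> proper_deriv_of w (leader f)) \<and> deg_in (leader f) g < deg_in (leader f) f"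

definition autoreduced :: "'k::zero dpoly list \<Rightarrow> bool" where
  "autoreduced L \<longleftrightarrow> distinct L \<and> (\<forall>f\<in>set L. nonconstant f) \<and>
     sorted_wrt (\<lambda>f g. \<not> rank_less (rank g) (rank f)) L \<and>
     (\<forall>f\<in>set L. \<forall>g\<in>set L. f \<noteq> g \<longrightarrow> reduced_wrt g f)"

definition auto_less :: "'k::zero dpoly list \<Rightarrow> 'k dpoly list \<Rightarrow> bool" where
  "auto_less G F \<longleftrightarrow>
     (\<exists>i. i < length G \<and> i < length F \<and> (\<forall>j<i. rank (G ! j) = rank (F ! j)) \<and>
          rank_less (rank (G ! i)) (rank (F ! i))) \<or>
     (length G > length F \<and> (\<forall>j<length F. rank (G ! j) = rank (F ! j)))"

definition char_set :: "'k::zero dpoly list \<Rightarrow> 'k dpoly set \<Rightarrow> bool" where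
  "char_set L P \<longleftrightarrow> autoreduced L \<and> set L \<subseteq> P \<and>
     (\<forall>L'. autoreduced L' \<and> set L' \<subseteq> P \<longrightarrow> \<not> auto_less L' L)"

definition is_ideal_in :: "'a::comm_ring_1 set \<Rightarrow> 'a set \<Rightarrow> bool" where
  "is_ideal_in R I \<longleftrightarrow> I \<subseteq> R \<and> 0 \<in> I \<and> (\<forall>a\<in>I. \<forall>b\<in>I. a + b \<in> I) \<and> (\<forall>r\<in>R. \<forall>a\<in>I. r * a \<in> I)"

definition is_prime_ideal_in :: "'a::comm_ring_1 set \<Rightarrow> 'a set \<Rightarrow> bool" where
  "is_prime_ideal_in R I \<longleftrightarrow> is_ideal_in R I \<and> 1 \<notin> I \<and>
     (\<forall>a\<in>R. \<forall>b\<in>R. a * b \<in> I \<longrightarrow> a \<in> I \<or> b \<in> I)"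

definition prime_diff_ideal :: "nat \<Rightarrow> nat \<Rightarrow> (nat \<Rightarrow> 'k::comm_ring_1 \<Rightarrow> 'k) \<Rightarrow> 'k dpoly set \<Rightarrow> bool" where
  "prime_diff_ideal n m D P \<longleftrightarrow> is_prime_ideal_in (Kx n m) P \<and>
     (\<forall>k<m. \<forall>p\<in>P. deriv_poly D k p \<in> P)"

definition gen_ideal :: "'a::comm_ring_1 set \<Rightarrow> 'a set \<Rightarrow> 'a set" where
  "gen_ideal R S = {sum_list (map (\<lambda>(a, g). a * g) ps) | ps. \<forall>(a, g)\<in>set ps. a \<in> R \<and> g \<in> S}"

definition saturation :: "'a::comm_ring_1 set \<Rightarrow> 'a set \<Rightarrow> 'a \<Rightarrow> 'a set" where
  "saturation R I h = {f\<in>R. \<exists>l::nat. h ^ l * f \<in> I}"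

definition prolong :: "nat \<Rightarrow> nat \<Rightarrow> (nat \<Rightarrow> 'k::comm_ring_1 \<Rightarrow> 'k) \<Rightarrow> nat \<Rightarrow> 'k dpoly set \<Rightarrow> 'k dpoly set" where
  "prolong n m D r \<Lambda> = {dpow D \<xi> f | \<xi> f. f \<in> \<Lambda> \<and> length \<xi> = m \<and> dpow D \<xi> f \<in> Kx_le n m r}"

definition H_of :: "'k::comm_ring_1 dpoly set \<Rightarrow> 'k dpoly" where
  "H_of \<Lambda> = (\<Prod>f\<in>\<Lambda>. initial f * separant f)"

end

theory Submission
  imports Defs
begin

text \<open>
  The saturation lies in P because the prolongations \<Lambda>^(r) lie in P while H_\<Lambda> does not:
  initials and separants of \<Lambda> are nonzero and reduced with respect to \<Lambda>, and a nonzero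
  element of P reduced with respect to \<Lambda> could be appended to an initial segment of \<Lambda> to
  give a lower autoreduced subset of P.

  Conversely, g \<in> P \<inter> K{x}_{\<le>r} is pseudo-reduced inside K{x}_{\<le>r}. Let w be the highest
  variable of g that is either a proper derivative \<delta>^\<xi> v_f of a leader or a leader v_f
  occurring in degree at least d_f. The reducer h = \<delta>^\<xi> f = S_f w + (lower terms), resp.
  h = f = I_f w^{d_f} + (lower terms), has order at most that of w, hence at most r, and
  cancelling the top power of w in S_f g, resp. I_f g, lowers the degree in w without raising
  the degree in any higher variable. Iterating ends with an element of P reduced with respect
  to \<Lambda>, which is 0, so some power of H_\<Lambda> times g lies in (\<Lambda>^(r)).
\<close>

section \<open>The ranking\<close>

lemma lex_iff_nth:
  "(xs, ys) \<in> lex r \<longleftrightarrow>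
    length xs = length ys \<and> (\<exists>i<length xs. (\<forall>j<i. xs ! j = ys ! j) \<and> (xs ! i, ys ! i) \<in> r)"
proof
  assume "(xs, ys) \<in> lex r"
  then obtain i where "i < length xs" "take i xs = take i ys" "(xs ! i, ys ! i) \<in> r"
    by (rule lex_take_index)
  moreover have "length xs = length ys"
    using \<open>(xs, ys) \<in> lex r\<close> by (simp add: lex_conv)
  ultimately show "length xs = length ys \<and> (\<exists>i<length xs. (\<forall>j<i. xs ! j = ys ! j) \<and> (xs ! i, ys ! i) \<in> r)"
    by (metis nth_take)
next
  assume "length xs = length ys \<and> (\<exists>i<length xs. (\<forall>j<i. xs ! j = ys ! j) \<and> (xs ! i, ys ! i) \<in> r)"
  then obtain i where len: "length xs = length ys" and i: "i < length xs"
    and prefix: "\<forall>j<i. xs ! j = ys ! j" and r: "(xs ! i, ys ! i) \<in> r"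
    by blast
  have "take i xs = take i ys"
    using i len prefix by (intro nth_equalityI) auto
  moreover have "(xs ! i # drop (Suc i) xs, ys ! i # drop (Suc i) ys) \<in> lex r"
    using r len by simp
  ultimately have "(take i xs @ xs ! i # drop (Suc i) xs, take i ys @ ys ! i # drop (Suc i) ys) \<in> lex r"
    by (simp add: lex_append_leftI)
  then show "(xs, ys) \<in> lex r"
    using i len by (simp add: id_take_nth_drop[symmetric])
qed

lemma var_less_irrefl: "\<not> var_less v v"
  by (auto simp: var_less_def lex_iff_nth)

lemma var_less_trans: "var_less u v \<Longrightarrow> var_less v w \<Longrightarrow> var_less u w"
proof -
  have "trans (lex {(a, b). (a::nat) < b})"
    by (rule lex_transI) (auto simp: trans_def)
  then show "var_less u v \<Longrightarrow> var_less v w \<Longrightarrow> var_less u w"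
    unfolding var_less_def by (auto dest: transD)
qed

lemma var_less_asym: "var_less v w \<Longrightarrow> \<not> var_less w v"
  using var_less_irrefl var_less_trans by blast

lemma var_less_linear:
  assumes "length (snd v) = length (snd w)" "v \<noteq> w"
  shows "var_less v w \<or> var_less w v"
proof (cases "snd v = snd w")
  case True
  then have "fst v \<noteq> fst w"
    using assms(2) prod_eqI by blast
  then show ?thesis
    using True by (auto simp: var_less_def)
next
  case False
  have "total (lenlex {(a, b). (a::nat) < b})"
    by (rule total_lenlex) (auto simp: total_on_def)
  then have "(snd v, snd w) \<in> lenlex {(a, b). a < b} \<or> (snd w, snd v) \<in> lenlex {(a, b). a < b}"
    using False unfolding total_on_def by blast
  then have "(snd v, snd w) \<in> lex {(a, b). a < b} \<or> (snd w, snd v) \<in> lex {(a, b). a < b}"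
    using assms(1) by (auto simp: lenlex_conv)
  then show ?thesis
    unfolding var_less_def by auto
qed

lemma sum_list_shift [simp]:
  "k < length xs \<Longrightarrow> sum_list ((xs::nat list)[k := Suc (xs ! k)]) = Suc (sum_list xs)"
  by (simp add: sum_list_update elem_le_sum_list)

lemma fst_shift_var [simp]: "fst (shift_var k v) = fst v"
  by (simp add: shift_var_def)

lemma length_shift_var [simp]: "length (snd (shift_var k v)) = length (snd v)"
  by (simp add: shift_var_def)

lemma var_less_shift_var: "k < length (snd v) \<Longrightarrow> var_less v (shift_var k v)"
  by (simp add: var_less_def shift_var_def)

lemma shift_var_mono:
  assumes "var_less v w" "k < length (snd v)" "k < length (snd w)"
  shows "var_less (shift_var k v) (shift_var k w)"
proof -
  have "(xs[k := xs ! k + 1], ys[k := ys ! k + 1]) \<in> lex {(a, b). (a::nat) < b}"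
    if lex: "(xs, ys) \<in> lex {(a, b). a < b}" and k: "k < length xs" for xs ys
  proof -
    obtain i where "length xs = length ys" "i < length xs" "\<forall>j<i. xs ! j = ys ! j" "xs ! i < ys ! i"
      using lex unfolding lex_iff_nth by auto
    then show ?thesis
      using k unfolding lex_iff_nth by (intro conjI exI[of _ i]) (auto simp: nth_list_update)
  qed
  moreover obtain i xs j ys where "v = (i, xs)" "w = (j, ys)"
    by (cases v, cases w)
  ultimately show ?thesis
    using assms unfolding var_less_def shift_var_def by auto
qed

lemma proper_deriv_of_var_less:
  assumes "proper_deriv_of w v"
  shows "var_less v w"
proof -
  have len: "length (snd v) = length (snd w)" and le: "\<forall>k<length (snd v). snd v ! k \<le> snd w ! k"
    and ne: "snd w \<noteq> snd v"
    using assms by (auto simp: proper_deriv_of_def)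
  obtain k where k: "k < length (snd v)" "snd v ! k \<noteq> snd w ! k"
    using len ne nth_equalityI by metis
  have "sum_list (snd v) = (\<Sum>i<length (snd v). snd v ! i)"
    by (simp add: sum_list_sum_nth atLeast0LessThan)
  also have "\<dots> < (\<Sum>i<length (snd v). snd w ! i)"
    using le k by (intro sum_strict_mono_ex1) (auto intro!: bexI[of _ k])
  also have "\<dots> = sum_list (snd w)"
    using len by (simp add: sum_list_sum_nth atLeast0LessThan)
  finally show ?thesis
    by (simp add: var_less_def)
qed

definition var_le :: "dvar \<Rightarrow> dvar \<Rightarrow> bool" where
  "var_le v w \<longleftrightarrow> v = w \<or> var_less v w"

lemma var_le_refl [simp]: "var_le v v"
  by (simp add: var_le_def)

lemma var_le_less_trans: "var_le u v \<Longrightarrow> var_less v w \<Longrightarrow> var_less u w"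
  unfolding var_le_def using var_less_trans by blast

lemma not_var_less_imp_var_le:
  "length (snd v) = length (snd w) \<Longrightarrow> \<not> var_less w v \<Longrightarrow> var_le v w"
  using var_less_linear unfolding var_le_def by blast

lemma var_le_imp_sum_list_le: "var_le v w \<Longrightarrow> sum_list (snd v) \<le> sum_list (snd w)"
  unfolding var_le_def var_less_def by auto


abbreviation lookup :: "('a \<Rightarrow>\<^sub>0 'b::zero) \<Rightarrow> 'a \<Rightarrow> 'b" where
  "lookup \<equiv> Poly_Mapping.lookup"

abbreviation keys :: "('a \<Rightarrow>\<^sub>0 'b::zero) \<Rightarrow> 'a set" where
  "keys \<equiv> Poly_Mapping.keys"

abbreviation single :: "'a \<Rightarrow> 'b::zero \<Rightarrow> 'a \<Rightarrow>\<^sub>0 'b" where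
  "single \<equiv> Poly_Mapping.single"

lemma finite_vars [simp]: "finite (vars f)"
  by (simp add: vars_def)

lemma vars_one [simp]: "vars (1::'k::comm_semiring_1 dpoly) = {}"
  by (simp add: vars_def)

lemma vars_uminus [simp]: "vars (- f) = vars (f::'k::ab_group_add dpoly)"
  by (simp add: vars_def)

lemma vars_single: "vars (single M c) \<subseteq> keys M"
  by (simp add: vars_def)

lemma vars_add: "vars (f + g) \<subseteq> vars f \<union> vars g"
  using keys_add[of f g] by (auto simp: vars_def)

lemma vars_diff: "vars (f - g) \<subseteq> vars f \<union> vars (g::'k::ab_group_add dpoly)"
  using keys_diff[of f g] by (auto simp: vars_def)

lemma vars_mult: "vars (f * g) \<subseteq> vars f \<union> vars (g::'k::comm_semiring_1 dpoly)"
proof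
  fix u assume "u \<in> vars (f * g)"
  then obtain M where M: "M \<in> keys (f * g)" "u \<in> keys M"
    by (auto simp: vars_def)
  then obtain a b where "M = a + b" "a \<in> keys f" "b \<in> keys g"
    using keys_mult[of f g] by blast
  then show "u \<in> vars f \<union> vars g"
    using M keys_add[of a b] by (auto simp: vars_def)
qed

lemma vars_sum: "vars (sum F A) \<subseteq> (\<Union>a\<in>A. vars (F a :: 'k::comm_monoid_add dpoly))"
  using keys_sum[of F A] unfolding vars_def by blast

lemma vars_prod: "vars (prod F A) \<subseteq> (\<Union>a\<in>A. vars (F a :: 'k::comm_semiring_1 dpoly))"
proof (induction A rule: infinite_finite_induct)
  case (insert x F)
  then show ?case
    using vars_mult by fastforce
qed auto

lemma constant_eq_single_0:
  assumes "vars f = {}"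
  shows "f = single 0 (lookup f 0)"
proof (rule poly_mapping_eqI)
  fix M
  show "lookup f M = lookup (single 0 (lookup f 0)) M"
  proof (cases "M = 0")
    case False
    then obtain u where "u \<in> keys M"
      by (metis keys_eq_empty ex_in_conv)
    then have "M \<notin> keys f"
      using assms by (auto simp: vars_def)
    then show ?thesis
      using False by (simp add: in_keys_iff lookup_single when_def)
  qed simp
qed

definition polys_in :: "dvar set \<Rightarrow> 'k::zero dpoly set" where
  "polys_in V = {f. vars f \<subseteq> V}"

definition bounded_vars :: "nat \<Rightarrow> nat \<Rightarrow> nat \<Rightarrow> dvar set" where
  "bounded_vars n m r = {v. valid_var n m v \<and> sum_list (snd v) \<le> r}"

lemma Kx_eq_polys_in: "Kx n m = polys_in {v. valid_var n m v}"
  by (auto simp: Kx_def polys_in_def)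

lemma Kx_le_eq_polys_in: "Kx_le n m r = polys_in (bounded_vars n m r)"
  by (auto simp: Kx_le_def polys_in_def bounded_vars_def)

lemma Kx_le_subset_Kx: "Kx_le n m r \<subseteq> Kx n m"
  by (auto simp: Kx_le_def Kx_def)

lemma bounded_vars_valid: "bounded_vars n m r \<subseteq> {v. valid_var n m v}"
  by (auto simp: bounded_vars_def)

lemma finite_bounded_vars: "finite (bounded_vars n m r)"
proof (rule finite_subset)
  show "bounded_vars n m r \<subseteq> {..<n} \<times> {xs. set xs \<subseteq> {..r} \<and> length xs = m}"
    by (force simp: bounded_vars_def valid_var_def dest: member_le_sum_list)
  show "finite ({..<n} \<times> {xs. set xs \<subseteq> {..r} \<and> length xs = m})"
    by (intro finite_cartesian_product finite_lists_length_eq) auto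
qed

lemma polys_in_mult:
  "f \<in> polys_in V \<Longrightarrow> g \<in> polys_in V \<Longrightarrow> f * g \<in> (polys_in V :: 'k::comm_semiring_1 dpoly set)"
  using vars_mult[of f g] by (auto simp: polys_in_def)

lemma polys_in_diff:
  "f \<in> polys_in V \<Longrightarrow> g \<in> polys_in V \<Longrightarrow> f - g \<in> (polys_in V :: 'k::ab_group_add dpoly set)"
  using vars_diff[of f g] by (auto simp: polys_in_def)

lemma polys_in_single_0: "single 0 c \<in> polys_in V"
  using vars_single[of 0 c] by (simp add: polys_in_def)

lemma polys_in_one: "1 \<in> (polys_in V :: 'k::comm_semiring_1 dpoly set)"
  by (simp add: polys_in_def)

lemma polys_in_minus_one: "- 1 \<in> (polys_in V :: 'k::comm_ring_1 dpoly set)"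
  by (simp add: polys_in_def)

lemma polys_in_prod:
  "(\<And>a. a \<in> A \<Longrightarrow> F a \<in> polys_in V) \<Longrightarrow> prod F A \<in> (polys_in V :: 'k::comm_semiring_1 dpoly set)"
  using vars_prod[of F A] by (fastforce simp: polys_in_def)

lemma deg_in_le_iff: "deg_in u f \<le> d \<longleftrightarrow> (\<forall>M\<in>keys f. lookup M u \<le> d)"
  by (auto simp: deg_in_def)

lemma lookup_le_deg_in: "M \<in> keys f \<Longrightarrow> lookup M u \<le> deg_in u f"
  using deg_in_le_iff by blast

lemma deg_in_eq_0_iff: "deg_in u f = 0 \<longleftrightarrow> u \<notin> vars f"
  using deg_in_le_iff[of u f 0] by (auto simp: vars_def in_keys_iff)

lemma deg_in_attained:
  assumes "deg_in u f > 0"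
  obtains M where "M \<in> keys f" "lookup M u = deg_in u f"
proof -
  have "deg_in u f \<in> insert 0 ((\<lambda>M. lookup M u) ` keys f)"
    unfolding deg_in_def by (rule Max_in) simp_all
  then show ?thesis
    using assms that by auto
qed

lemma deg_in_diff_le:
  "deg_in u (f - g) \<le> max (deg_in u f) (deg_in u (g::'k::ab_group_add dpoly))"
  unfolding deg_in_le_iff
proof
  fix M assume "M \<in> keys (f - g)"
  then have "M \<in> keys f \<or> M \<in> keys g"
    using keys_diff[of f g] by blast
  then show "lookup M u \<le> max (deg_in u f) (deg_in u g)"
    using lookup_le_deg_in[of M f u] lookup_le_deg_in[of M g u] by auto
qed

lemma deg_in_mult_le:
  "deg_in u (f * g) \<le> deg_in u f + deg_in u (g::'k::comm_semiring_1 dpoly)"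
  unfolding deg_in_le_iff
proof
  fix M assume "M \<in> keys (f * g)"
  then obtain a b where "M = a + b" "a \<in> keys f" "b \<in> keys g"
    using keys_mult[of f g] by blast
  then show "lookup M u \<le> deg_in u f + deg_in u g"
    by (simp add: lookup_add add_mono lookup_le_deg_in)
qed


definition var_pow :: "dvar \<Rightarrow> nat \<Rightarrow> 'k::comm_semiring_1 dpoly" where
  "var_pow w d = single (single w d) 1"

lemma var_pow_mult: "var_pow w a * var_pow w b = (var_pow w (a + b) :: 'k::comm_semiring_1 dpoly)"
  by (simp add: var_pow_def mult_single single_add)

lemma vars_var_pow: "vars (var_pow w d :: 'k::comm_semiring_1 dpoly) \<subseteq> {w}"
  by (auto simp: var_pow_def vars_def)

lemma deg_in_var_pow_le: "deg_in w (var_pow w d :: 'k::comm_semiring_1 dpoly) \<le> d"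
  by (simp add: var_pow_def deg_in_le_iff)

lemma polys_in_var_pow: "w \<in> V \<Longrightarrow> var_pow w d \<in> (polys_in V :: 'k::comm_semiring_1 dpoly set)"
  using vars_var_pow[of w d] by (auto simp: polys_in_def)

lemma lookup_single_var: "lookup (single w d) u = (if u = w then d else 0)"
  by (simp add: lookup_single when_def)

lemma lookup_minus_single_var: "lookup (M - single w d) u = lookup M u - (if u = w then d else 0)"
  by (simp add: lookup_minus lookup_single_var)

lemma minus_plus_single_var:
  "d \<le> lookup M w \<Longrightarrow> M - single w d + single w d = (M :: dvar \<Rightarrow>\<^sub>0 nat)"
  by (rule poly_mapping_eqI) (simp add: lookup_add lookup_minus lookup_single_var)

lemma lookup_sum_single:
  "finite A \<Longrightarrow> lookup (\<Sum>M\<in>A. single M (c M)) N = (if N \<in> A then c N else (0::'b::comm_monoid_add))"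
  by (simp add: lookup_sum lookup_single when_def)

lemma poly_mapping_sum_single: "f = (\<Sum>M\<in>keys f. single M (lookup f M))"
  by (rule poly_mapping_eqI) (simp add: lookup_sum_single in_keys_iff)

lemma coeff_in_times_var_pow:
  "coeff_in w d f * var_pow w d = (\<Sum>M\<in>{M\<in>keys f. lookup M w = d}. single M (lookup f M))"
  unfolding coeff_in_def var_pow_def sum_distrib_right mult_single
  by (rule sum.cong) (auto simp: minus_plus_single_var)

lemma lookup_coeff_in_times_var_pow:
  "lookup (coeff_in w d f * var_pow w d) N = (if lookup N w = d then lookup f N else 0)"
  unfolding coeff_in_times_var_pow by (subst lookup_sum_single) (auto simp: in_keys_iff)

lemma keys_coeff_in:
  assumes "M \<in> keys (coeff_in w d f)"
  obtains N where "N \<in> keys f" "lookup N w = d" "M = N - single w d"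
proof -
  have "M \<in> (\<Union>N\<in>{N\<in>keys f. lookup N w = d}. keys (single (N - single w d) (lookup f N)))"
    using assms keys_sum[of "\<lambda>N. single (N - single w d) (lookup f N)"] unfolding coeff_in_def by blast
  then obtain N where "N \<in> keys f" "lookup N w = d" "M \<in> keys (single (N - single w d) (lookup f N))"
    by blast
  then show ?thesis
    using that by (simp split: if_splits)
qed

lemma vars_coeff_in: "vars (coeff_in w d f) \<subseteq> vars f - {w}"
proof
  fix u assume "u \<in> vars (coeff_in w d f)"
  then obtain M where M: "M \<in> keys (coeff_in w d f)" "u \<in> keys M"
    by (auto simp: vars_def)
  obtain N where "N \<in> keys f" "lookup N w = d" "M = N - single w d"
    using M(1) by (rule keys_coeff_in)
  then show "u \<in> vars f - {w}"
    using M(2) by (auto simp: lookup_minus_single_var vars_def in_keys_iff split: if_splits)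
qed

lemma polys_in_coeff_in: "f \<in> polys_in V \<Longrightarrow> coeff_in w d f \<in> polys_in V"
  using vars_coeff_in by (fastforce simp: polys_in_def)

lemma deg_in_coeff_in_le: "deg_in u (coeff_in w d f) \<le> deg_in u f"
  unfolding deg_in_le_iff
proof
  fix M assume "M \<in> keys (coeff_in w d f)"
  then obtain N where "N \<in> keys f" "M = N - single w d"
    by (rule keys_coeff_in)
  then show "lookup M u \<le> deg_in u f"
    using lookup_le_deg_in[of N f u] by (simp add: lookup_minus_single_var)
qed

lemma coeff_in_nonzero:
  assumes "N \<in> keys f" "lookup N w = d"
  shows "coeff_in w d f \<noteq> 0"
proof
  assume "coeff_in w d f = 0"
  then have "lookup (coeff_in w d f * var_pow w d) N = 0"
    by simp
  then show False
    using assms by (simp add: lookup_coeff_in_times_var_pow in_keys_iff)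
qed

definition reductum :: "dvar \<Rightarrow> nat \<Rightarrow> 'k::comm_ring_1 dpoly \<Rightarrow> 'k dpoly" where
  "reductum w d g = g - coeff_in w d g * var_pow w d"

lemma reductum_decomp: "g = coeff_in w d g * var_pow w d + reductum w d g"
  by (simp add: reductum_def)

lemma lookup_reductum: "lookup (reductum w d g) M = (if lookup M w = d then 0 else lookup g M)"
  by (simp add: reductum_def lookup_minus lookup_coeff_in_times_var_pow)

lemma keys_reductum: "keys (reductum w d g) \<subseteq> keys g"
  by (auto simp: in_keys_iff lookup_reductum split: if_splits)

lemma vars_reductum: "vars (reductum w d g) \<subseteq> vars g"
  using keys_reductum unfolding vars_def by blast

lemma deg_in_reductum_le: "deg_in u (reductum w d g) \<le> deg_in u g"
  unfolding deg_in_le_iff using keys_reductum lookup_le_deg_in by blast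

lemma deg_in_reductum_less:
  assumes "deg_in w g \<le> d"
  shows "deg_in w (reductum w d g) \<le> d - 1"
  unfolding deg_in_le_iff
proof
  fix M assume M: "M \<in> keys (reductum w d g)"
  then have "M \<in> keys g"
    using keys_reductum by blast
  then have "lookup M w \<le> d"
    using assms lookup_le_deg_in[of M g w] by simp
  moreover have "lookup M w \<noteq> d"
    using M by (auto simp: in_keys_iff lookup_reductum)
  ultimately show "lookup M w \<le> d - 1"
    by simp
qed

lemma keys_pderiv_var:
  assumes "M \<in> keys (pderiv_var w f)"
  obtains N where "N \<in> keys f" "M = N - single w 1"
proof -
  have "M \<in> (\<Union>N\<in>keys f. keys (single (N - single w 1) (of_nat (lookup N w) * lookup f N)))"
    using assms keys_sum[of "\<lambda>N. single (N - single w 1) (of_nat (lookup N w) * lookup f N)"]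
    unfolding pderiv_var_def by blast
  then obtain N where "N \<in> keys f" "M \<in> keys (single (N - single w 1) (of_nat (lookup N w) * lookup f N))"
    by blast
  then show ?thesis
    using that by (simp split: if_splits)
qed

lemma vars_pderiv_var: "vars (pderiv_var w f) \<subseteq> vars f"
proof
  fix u assume "u \<in> vars (pderiv_var w f)"
  then obtain M where M: "M \<in> keys (pderiv_var w f)" "u \<in> keys M"
    by (auto simp: vars_def)
  obtain N where N: "N \<in> keys f" "M = N - single w 1"
    using M(1) by (rule keys_pderiv_var)
  have "lookup N u \<noteq> 0"
    using M(2) N(2) by (auto simp: in_keys_iff lookup_minus_single_var split: if_splits)
  then show "u \<in> vars f"
    using N(1) by (auto simp: vars_def in_keys_iff)
qed

lemma deg_in_pderiv_var_le: "deg_in u (pderiv_var w f) \<le> deg_in u f"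
  unfolding deg_in_le_iff
proof
  fix M assume "M \<in> keys (pderiv_var w f)"
  then obtain N where "N \<in> keys f" "M = N - single w 1"
    by (rule keys_pderiv_var)
  then show "lookup M u \<le> deg_in u f"
    using lookup_le_deg_in[of N f u] by (simp add: lookup_minus_single_var)
qed

lemma deg_in_pderiv_var_self: "deg_in w (pderiv_var w f) \<le> deg_in w f - 1"
  unfolding deg_in_le_iff
proof
  fix M assume "M \<in> keys (pderiv_var w f)"
  then obtain N where "N \<in> keys f" "M = N - single w 1"
    by (rule keys_pderiv_var)
  then show "lookup M w \<le> deg_in w f - 1"
    using lookup_le_deg_in[of N f w] by (simp add: lookup_minus_single_var)
qed

lemma pderiv_var_times_var_pow:
  "pderiv_var w f * var_pow w 1 = (\<Sum>M\<in>keys f. single M (of_nat (lookup M w) * lookup f M))"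
  unfolding pderiv_var_def var_pow_def sum_distrib_right mult_single
proof (rule sum.cong)
  fix M
  show "single (M - single w 1 + single w 1) (of_nat (lookup M w) * lookup f M * 1) =
      single M (of_nat (lookup M w) * lookup f M)"
    by (cases "lookup M w = 0") (simp_all add: minus_plus_single_var)
qed simp

lemma pderiv_var_nonzero:
  assumes "N \<in> keys f" "lookup N w > 0"
  shows "pderiv_var w (f :: 'k::field_char_0 dpoly) \<noteq> 0"
proof
  assume "pderiv_var w f = 0"
  then have "lookup (pderiv_var w f * var_pow w 1) N = 0"
    by simp
  then have "of_nat (lookup N w) * lookup f N = (0::'k)"
    unfolding pderiv_var_times_var_pow using assms by (simp add: lookup_sum_single)
  then show False
    using assms by (simp add: in_keys_iff)
qed

lemma pderiv_var_add: "pderiv_var u (f + g) = pderiv_var u f + pderiv_var u (g::'k::comm_ring_1 dpoly)"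
  unfolding pderiv_var_def
  by (rule setsum_keys_plus_distrib) (simp_all add: distrib_left single_add)

lemma pderiv_var_sum: "pderiv_var u (sum F A) = (\<Sum>a\<in>A. pderiv_var u (F a :: 'k::comm_ring_1 dpoly))"
proof (induction A rule: infinite_finite_induct)
  case (infinite A)
  then show ?case
    by (simp add: pderiv_var_def)
next
  case empty
  then show ?case
    by (simp add: pderiv_var_def)
next
  case (insert x F)
  then show ?case
    by (simp add: pderiv_var_add)
qed

lemma pderiv_var_eq_0: "u \<notin> vars f \<Longrightarrow> pderiv_var u (f::'k::comm_ring_1 dpoly) = 0"
  unfolding pderiv_var_def by (rule sum.neutral) (auto simp: vars_def in_keys_iff)

lemma pderiv_var_single:
  "pderiv_var u (single N c) = single (N - single u 1) (of_nat (lookup N u) * (c::'k::comm_ring_1))"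
  by (simp add: pderiv_var_def)

lemma pderiv_var_linear:
  assumes "u \<notin> vars S" "u \<notin> vars T"
  shows "pderiv_var u (S * var_pow u 1 + T) = (S::'k::comm_ring_1 dpoly)"
proof -
  have "S * var_pow u 1 = (\<Sum>M\<in>keys S. single (M + single u 1) (lookup S M))"
    by (subst poly_mapping_sum_single[of S]) (simp add: var_pow_def sum_distrib_right mult_single)
  moreover have "pderiv_var u (single (M + single u 1) (lookup S M)) = single M (lookup S M)"
    if "M \<in> keys S" for M
  proof -
    have "lookup M u = 0"
      using assms(1) that by (auto simp: vars_def in_keys_iff)
    moreover have "M + single u 1 - single u 1 = M"
      by (rule poly_mapping_eqI) (simp add: lookup_add lookup_minus)
    ultimately show ?thesis
      by (simp add: pderiv_var_single lookup_add)
  qed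
  ultimately have "pderiv_var u (S * var_pow u 1) = (\<Sum>M\<in>keys S. single M (lookup S M))"
    by (simp add: pderiv_var_sum)
  then show ?thesis
    using pderiv_var_eq_0[OF assms(2)] poly_mapping_sum_single[of S] by (simp add: pderiv_var_add)
qed


section \<open>Leaders, initials and separants\<close>

lemma var_less_greatest_exists:
  assumes "finite A" "A \<noteq> {}" "\<forall>a\<in>A. length (snd a) = m"
  shows "\<exists>x\<in>A. \<forall>y\<in>A. y \<noteq> x \<longrightarrow> var_less y x"
  using assms
proof (induction A rule: finite_ne_induct)
  case (insert a A)
  then obtain x where x: "x \<in> A" "\<forall>y\<in>A. y \<noteq> x \<longrightarrow> var_less y x"
    by auto
  show ?case
  proof (cases "var_less x a")
    case True
    have "var_less y a" if "y \<in> A" for y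
      using True x var_less_trans[of y x a] that by (cases "y = x") auto
    then show ?thesis
      by blast
  next
    case False
    then have "a = x \<or> var_less a x"
      using var_less_linear[of a x] insert.prems x(1) by auto
    then show ?thesis
      using x by (intro bexI[of _ x]) auto
  qed
qed simp

lemma leader_greatest:
  assumes "nonconstant f" "f \<in> Kx n m"
  shows leader_in_vars: "leader f \<in> vars f"
    and var_le_leader: "w \<in> vars f \<Longrightarrow> var_le w (leader f)"
proof -
  have "\<forall>v\<in>vars f. length (snd v) = m"
    using assms(2) by (auto simp: Kx_def valid_var_def)
  moreover have "vars f \<noteq> {}"
    using assms(1) by (simp add: nonconstant_def)
  ultimately obtain x where x: "x \<in> vars f" "\<forall>y\<in>vars f. y \<noteq> x \<longrightarrow> var_less y x"
    using var_less_greatest_exists[OF finite_vars] by blast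
  have "leader f = x"
    unfolding leader_def
  proof (rule the_equality)
    fix v assume "v \<in> vars f \<and> (\<forall>w\<in>vars f. w \<noteq> v \<longrightarrow> var_less w v)"
    then show "v = x"
      using x var_less_asym[of v x] by metis
  qed (use x in blast)
  then show "leader f \<in> vars f" "w \<in> vars f \<Longrightarrow> var_le w (leader f)"
    using x by (auto simp: var_le_def)
qed

lemma valid_var_leader: "nonconstant f \<Longrightarrow> f \<in> Kx n m \<Longrightarrow> valid_var n m (leader f)"
  using leader_in_vars[of f n m] by (auto simp: Kx_def)

lemma deg_in_leader_pos: "nonconstant f \<Longrightarrow> f \<in> Kx n m \<Longrightarrow> deg_in (leader f) f > 0"
  using leader_in_vars[of f n m] deg_in_eq_0_iff[of "leader f" f] by simp

lemma vars_initial: "vars (initial f) \<subseteq> vars f - {leader f}"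
  unfolding initial_def by (rule vars_coeff_in)

lemma vars_separant: "vars (separant f) \<subseteq> vars f"
  unfolding separant_def by (rule vars_pderiv_var)

lemma deg_in_initial_le: "deg_in u (initial f) \<le> deg_in u f"
  unfolding initial_def by (rule deg_in_coeff_in_le)

lemma deg_in_separant_le: "deg_in u (separant f) \<le> deg_in u f"
  unfolding separant_def by (rule deg_in_pderiv_var_le)

lemma initial_nonzero:
  assumes "nonconstant f" "f \<in> Kx n m"
  shows "initial f \<noteq> 0"
proof -
  obtain M where "M \<in> keys f" "lookup M (leader f) = deg_in (leader f) f"
    using deg_in_attained deg_in_leader_pos[OF assms] by blast
  then show ?thesis
    unfolding initial_def by (rule coeff_in_nonzero)
qed

lemma separant_nonzero:
  assumes "nonconstant f" "f \<in> Kx n m"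
  shows "separant (f::'k::field_char_0 dpoly) \<noteq> 0"
proof -
  obtain M where "M \<in> keys f" "lookup M (leader f) = deg_in (leader f) f"
    using deg_in_attained deg_in_leader_pos[OF assms] by blast
  then show ?thesis
    unfolding separant_def using deg_in_leader_pos[OF assms] pderiv_var_nonzero by metis
qed


section \<open>Derivatives are linear in their leaders\<close>

definition linear_in :: "nat \<Rightarrow> nat \<Rightarrow> 'k::comm_ring_1 dpoly \<Rightarrow> dvar \<Rightarrow> 'k dpoly \<Rightarrow> bool" where
  "linear_in n m S u g \<longleftrightarrow>
     (\<exists>T. g = S * var_pow u 1 + T \<and> vars T \<subseteq> {t. var_less t u \<and> valid_var n m t})"

lemma vars_linear_in:
  assumes "linear_in n m S u g"
  shows "vars g \<subseteq> vars S \<union> {t. var_le t u \<and> valid_var n m t} \<union> {u}"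
proof -
  obtain T where "g = S * var_pow u 1 + T" "vars T \<subseteq> {t. var_less t u \<and> valid_var n m t}"
    using assms by (auto simp: linear_in_def)
  then show ?thesis
    using vars_add[of "S * var_pow u 1" T] vars_mult[of S "var_pow u 1"] vars_var_pow[of u 1]
    by (auto simp: var_le_def)
qed

lemma deriv_poly_eq_pderiv_var_plus:
  "deriv_poly D k g = pderiv_var u g * var_pow (shift_var k u) 1 +
     (\<Sum>M\<in>keys g. single M (D k (lookup g M)) +
        (\<Sum>v\<in>keys M - {u}. single (M - single v 1 + single (shift_var k v) 1) (of_nat (lookup M v) * lookup g M)))"
  (is "_ = _ + (\<Sum>M\<in>keys g. _ + (\<Sum>v\<in>keys M - {u}. ?F M v))")
proof -
  have "(\<Sum>v\<in>keys M. ?F M v) = ?F M u + (\<Sum>v\<in>keys M - {u}. ?F M v)" for M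
    by (cases "u \<in> keys M") (simp_all add: sum.remove in_keys_iff)
  moreover have "(\<Sum>M\<in>keys g. ?F M u) = pderiv_var u g * var_pow (shift_var k u) 1"
    unfolding pderiv_var_def var_pow_def sum_distrib_right mult_single by simp
  ultimately show ?thesis
    unfolding deriv_poly_def by (simp add: sum.distrib algebra_simps)
qed

lemma deriv_poly_linear_in_shift_var:
  fixes g :: "'k::comm_ring_1 dpoly"
  assumes below: "\<forall>t\<in>vars g. var_le t u \<and> valid_var n m t"
    and u: "valid_var n m u" and k: "k < m"
  shows "linear_in n m (pderiv_var u g) (shift_var k u) (deriv_poly D k g)"
proof -
  let ?su = "shift_var k u"
  define F where "F M v = single (M - single v 1 + single (shift_var k v) 1) (of_nat (lookup M v) * lookup g M)"
    for M v
  define T where "T = (\<Sum>M\<in>keys g. single M (D k (lookup g M)) + (\<Sum>v\<in>keys M - {u}. F M v))"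
  have decomp: "deriv_poly D k g = pderiv_var u g * var_pow ?su 1 + T"
    unfolding T_def F_def by (rule deriv_poly_eq_pderiv_var_plus)
  have length_u: "length (snd u) = m"
    using u by (simp add: valid_var_def)
  have lower: "var_less t ?su \<and> valid_var n m t" if "t \<in> vars g" for t
    using below that var_le_less_trans[OF _ var_less_shift_var[of k u]] length_u k by auto
  have "var_less t ?su \<and> valid_var n m t" if "t \<in> vars T" for t
  proof -
    obtain M where M: "M \<in> keys g"
      and "t \<in> vars (single M (D k (lookup g M))) \<or> t \<in> vars (\<Sum>v\<in>keys M - {u}. F M v)"
      using \<open>t \<in> vars T\<close> vars_sum[of _ "keys g"] vars_add unfolding T_def by blast
    moreover have "keys (M - single v 1 + single w 1) \<subseteq> keys M \<union> {w}" for v w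
      by (auto simp: in_keys_iff lookup_add lookup_minus lookup_single_var split: if_splits)
    ultimately consider "t \<in> keys M" | v where "v \<in> keys M" "v \<noteq> u" "t = shift_var k v"
      using vars_single[of M] vars_sum[of "F M" "keys M - {u}"] vars_single unfolding F_def by blast
    then show ?thesis
    proof cases
      case 1
      then have "t \<in> vars g"
        using M by (auto simp: vars_def)
      then show ?thesis
        by (rule lower)
    next
      case (2 v)
      then have "v \<in> vars g"
        using M by (auto simp: vars_def)
      then have "var_less v u" "valid_var n m v"
        using below \<open>v \<noteq> u\<close> by (auto simp: var_le_def)
      then show ?thesis
        using shift_var_mono[of v u k] length_u k \<open>t = shift_var k v\<close>
        by (auto simp: valid_var_def)
    qed
  qed
  then show ?thesis
    using decomp unfolding linear_in_def by blast
qed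

text \<open>The shape of \<delta>^\<xi> f, where u = \<delta>^\<xi> v_f: f itself when \<xi> = 0, and otherwise linear in u
  with the separant of f as coefficient.\<close>

definition derivative_form :: "nat \<Rightarrow> nat \<Rightarrow> 'k::comm_ring_1 dpoly \<Rightarrow> dvar \<Rightarrow> 'k dpoly \<Rightarrow> bool" where
  "derivative_form n m f u g \<longleftrightarrow> valid_var n m u \<and>
     (g = f \<and> u = leader f \<or> var_less (leader f) u \<and> linear_in n m (separant f) u g)"

lemma vars_derivative_form:
  assumes "derivative_form n m f u g" "nonconstant f" "f \<in> Kx n m"
  shows "vars g \<subseteq> {t. var_le t u \<and> valid_var n m t}"
proof -
  have f_below: "var_le t (leader f) \<and> valid_var n m t" if "t \<in> vars f" for t
    using var_le_leader[OF assms(2,3) that] that assms(3) by (auto simp: Kx_def)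
  consider "g = f" "u = leader f" | "var_less (leader f) u" "linear_in n m (separant f) u g"
    using assms(1) unfolding derivative_form_def by blast
  then show ?thesis
  proof cases
    case 1
    then show ?thesis
      using f_below by blast
  next
    case 2
    have "var_le t u \<and> valid_var n m t" if "t \<in> vars (separant f)" for t
      using that vars_separant f_below var_le_less_trans[OF _ 2(1)] by (fastforce simp: var_le_def)
    then show ?thesis
      using vars_linear_in[OF 2(2)] assms(1) by (auto simp: derivative_form_def)
  qed
qed

lemma derivative_form_deriv_poly:
  assumes form: "derivative_form n m f u g" and f: "nonconstant f" "f \<in> Kx n m" and k: "k < m"
  shows "derivative_form n m f (shift_var k u) (deriv_poly D k g)"
proof -
  have u: "valid_var n m u"
    using form by (simp add: derivative_form_def)
  then have u_less: "var_less u (shift_var k u)"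
    using var_less_shift_var k by (simp add: valid_var_def)
  have "pderiv_var u g = separant f \<and> var_le (leader f) u"
  proof -
    consider "g = f" "u = leader f" | "var_less (leader f) u" "linear_in n m (separant f) u g"
      using form unfolding derivative_form_def by blast
    then show ?thesis
    proof cases
      case 1
      then show ?thesis
        by (simp add: separant_def)
    next
      case 2
      then obtain T where T: "g = separant f * var_pow u 1 + T"
        "vars T \<subseteq> {t. var_less t u \<and> valid_var n m t}"
        unfolding linear_in_def by blast
      have "u \<notin> vars (separant f)"
        using vars_separant var_le_leader[OF f] var_le_less_trans[OF _ 2(1)] var_less_irrefl by blast
      moreover have "u \<notin> vars T"
        using T(2) var_less_irrefl by blast
      ultimately show ?thesis
        using T(1) 2(1) pderiv_var_linear by (simp add: var_le_def)
    qed
  qed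
  moreover have "linear_in n m (pderiv_var u g) (shift_var k u) (deriv_poly D k g)"
    using deriv_poly_linear_in_shift_var vars_derivative_form[OF form f] u k by blast
  ultimately show ?thesis
    using var_le_less_trans[OF _ u_less] u k unfolding derivative_form_def valid_var_def by auto
qed

lemma derivative_form_foldr:
  assumes "derivative_form n m f u g" "nonconstant f" "f \<in> Kx n m" "\<forall>k\<in>set ks. k < m"
  shows "derivative_form n m f (foldr (\<lambda>k. shift_var k ^^ (\<xi> ! k)) ks u)
           (foldr (\<lambda>k. deriv_poly D k ^^ (\<xi> ! k)) ks g)"
proof -
  have "derivative_form n m f ((shift_var k ^^ j) v) ((deriv_poly D k ^^ j) h)"
    if "derivative_form n m f v h" "k < m" for k j v h
    using that by (induction j) (simp_all add: derivative_form_deriv_poly assms(2,3))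
  then show ?thesis
    using assms(1,4) by (induction ks) auto
qed

lemma funpow_shift_var:
  "k < length (snd u) \<Longrightarrow> (shift_var k ^^ j) u = (fst u, (snd u)[k := snd u ! k + j])"
  by (induction j) (simp_all add: shift_var_def)

lemma foldr_shift_var:
  assumes "distinct ks" "\<forall>k\<in>set ks. k < length (snd u)"
  shows "foldr (\<lambda>k. shift_var k ^^ (\<xi> ! k)) ks u =
         (fst u, map (\<lambda>i. snd u ! i + (if i \<in> set ks then \<xi> ! i else 0)) [0..<length (snd u)])"
  using assms
proof (induction ks)
  case Nil
  then show ?case
    by (simp add: map_nth)
next
  case (Cons a ks)
  let ?xs = "map (\<lambda>i. snd u ! i + (if i \<in> set ks then \<xi> ! i else 0)) [0..<length (snd u)]"
  have "foldr (\<lambda>k. shift_var k ^^ (\<xi> ! k)) (a # ks) u = (fst u, ?xs[a := ?xs ! a + \<xi> ! a])"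
    using Cons funpow_shift_var[of a "(fst u, ?xs)"] by simp
  also have "?xs[a := ?xs ! a + \<xi> ! a] =
      map (\<lambda>i. snd u ! i + (if i \<in> set (a # ks) then \<xi> ! i else 0)) [0..<length (snd u)]"
    using Cons.prems by (intro nth_equalityI) (auto simp: nth_list_update)
  finally show ?case .
qed

lemma dpow_linear_in_proper_derivative:
  fixes f :: "'k::comm_ring_1 dpoly"
  assumes f: "nonconstant f" "f \<in> Kx n m" and w: "valid_var n m w" "proper_deriv_of w (leader f)"
  obtains \<xi> where "length \<xi> = m" "linear_in n m (separant f) w (dpow D \<xi> f)"
proof -
  let ?v = "leader f"
  define \<xi> where "\<xi> = map (\<lambda>i. snd w ! i - snd ?v ! i) [0..<m]"
  have v: "valid_var n m ?v"
    by (rule valid_var_leader[OF f])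
  have length_\<xi>: "length \<xi> = m"
    by (simp add: \<xi>_def)
  have "foldr (\<lambda>k. shift_var k ^^ (\<xi> ! k)) [0..<m] ?v = w"
  proof -
    have "foldr (\<lambda>k. shift_var k ^^ (\<xi> ! k)) [0..<m] ?v =
        (fst ?v, map (\<lambda>i. snd ?v ! i + (if i \<in> set [0..<m] then \<xi> ! i else 0)) [0..<length (snd ?v)])"
      using v by (intro foldr_shift_var) (auto simp: valid_var_def)
    also have "\<dots> = w"
      using v w by (cases w) (auto simp: \<xi>_def proper_deriv_of_def valid_var_def intro!: nth_equalityI)
    finally show ?thesis .
  qed
  moreover have "derivative_form n m f ?v f"
    using v by (simp add: derivative_form_def)
  ultimately have "derivative_form n m f w (dpow D \<xi> f)"
    using derivative_form_foldr[OF _ f, of ?v f "[0..<m]" \<xi> D] length_\<xi> by (simp add: dpow_def)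
  moreover have "w \<noteq> ?v"
    using w(2) by (auto simp: proper_deriv_of_def)
  ultimately show ?thesis
    using that length_\<xi> by (auto simp: derivative_form_def)
qed


lemma gen_ideal_zero: "0 \<in> gen_ideal R S"
  unfolding gen_ideal_def by (rule CollectI, rule exI[of _ "[]"]) simp

lemma gen_ideal_add:
  assumes "x \<in> gen_ideal R S" "y \<in> gen_ideal R S"
  shows "x + y \<in> gen_ideal R S"
proof -
  obtain ps qs where "x = sum_list (map (\<lambda>(a, g). a * g) ps)" "\<forall>(a, g)\<in>set ps. a \<in> R \<and> g \<in> S"
    "y = sum_list (map (\<lambda>(a, g). a * g) qs)" "\<forall>(a, g)\<in>set qs. a \<in> R \<and> g \<in> S"
    using assms unfolding gen_ideal_def by blast
  then have "x + y = sum_list (map (\<lambda>(a, g). a * g) (ps @ qs)) \<and> (\<forall>(a, g)\<in>set (ps @ qs). a \<in> R \<and> g \<in> S)"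
    by auto
  then show ?thesis
    unfolding gen_ideal_def by blast
qed

lemma gen_ideal_generator_mult: "a \<in> R \<Longrightarrow> g \<in> S \<Longrightarrow> a * g \<in> gen_ideal R S"
  unfolding gen_ideal_def by (rule CollectI, rule exI[of _ "[(a, g)]"]) simp

lemma gen_ideal_mult:
  assumes "\<And>a. a \<in> R \<Longrightarrow> c * a \<in> R" "x \<in> gen_ideal R S"
  shows "c * x \<in> gen_ideal R (S :: 'a::comm_ring_1 set)"
proof -
  obtain ps where ps: "x = sum_list (map (\<lambda>(a, g). a * g) ps)" "\<forall>(a, g)\<in>set ps. a \<in> R \<and> g \<in> S"
    using assms(2) unfolding gen_ideal_def by blast
  have "c * sum_list (map (\<lambda>(a, g). a * g) ps) = sum_list (map (\<lambda>(a, g). a * g) (map (\<lambda>(a, g). (c * a, g)) ps))"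
    by (induction ps) (auto simp: algebra_simps)
  moreover have "\<forall>(a, g)\<in>set (map (\<lambda>(a, g). (c * a, g)) ps). a \<in> R \<and> g \<in> S"
    using ps(2) assms(1) by auto
  ultimately show ?thesis
    unfolding gen_ideal_def ps(1) by blast
qed

lemma gen_ideal_power_mult_chain:
  assumes closed: "\<And>a b. a \<in> R \<Longrightarrow> b \<in> R \<Longrightarrow> a * b \<in> R" and "h \<in> R" "c \<in> R"
    and "h * g - c * g1 \<in> gen_ideal R S" "h ^ l * g1 - a * g2 \<in> gen_ideal R S"
  shows "h ^ Suc l * g - (c * a) * g2 \<in> gen_ideal R (S :: 'a::comm_ring_1 set)"
proof -
  have "h ^ l * x \<in> R" if "x \<in> R" for x
    using that closed \<open>h \<in> R\<close> by (induction l) (simp_all add: mult.assoc)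
  then have "h ^ l * (h * g - c * g1) + c * (h ^ l * g1 - a * g2) \<in> gen_ideal R S"
    using assms by (intro gen_ideal_add gen_ideal_mult) simp_all
  moreover have "h ^ l * (h * g - c * g1) + c * (h ^ l * g1 - a * g2) = h ^ Suc l * g - (c * a) * g2"
    by (simp add: algebra_simps)
  ultimately show ?thesis
    by simp
qed

lemma gen_ideal_subset:
  assumes I: "is_ideal_in K I" and "R \<subseteq> K" "S \<subseteq> I"
  shows "gen_ideal R S \<subseteq> (I :: 'a::comm_ring_1 set)"
proof
  fix x assume "x \<in> gen_ideal R S"
  then obtain ps where "x = sum_list (map (\<lambda>(a, g). a * g) ps)" and ps: "\<forall>(a, g)\<in>set ps. a \<in> R \<and> g \<in> S"
    unfolding gen_ideal_def by blast
  moreover have "sum_list (map (\<lambda>(a, g). a * g) ps) \<in> I"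
    using ps
  proof (induction ps)
    case Nil
    then show ?case
      using I by (simp add: is_ideal_in_def)
  next
    case (Cons p ps)
    obtain a g where p: "p = (a, g)"
      by (cases p)
    then have "a \<in> K" "g \<in> I"
      using Cons.prems assms(2,3) by auto
    then have "a * g \<in> I"
      using I by (simp add: is_ideal_in_def)
    then show ?case
      using Cons I p by (simp add: is_ideal_in_def)
  qed
  ultimately show "x \<in> I"
    by simp
qed

lemma is_ideal_in_diff:
  assumes "is_ideal_in R I" "- 1 \<in> R" "a \<in> I" "b \<in> I"
  shows "a - b \<in> I"
proof -
  have "a + (- 1) * b \<in> I"
    using assms unfolding is_ideal_in_def by blast
  then show ?thesis
    by simp
qed

lemma prime_ideal_prod_notin:
  assumes P: "is_prime_ideal_in R P" and "1 \<in> R"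
    and mult_closed: "\<And>a b. a \<in> R \<Longrightarrow> b \<in> R \<Longrightarrow> a * b \<in> R"
    and "finite A" "\<And>a. a \<in> A \<Longrightarrow> F a \<in> R \<and> F a \<notin> P"
  shows "prod F A \<in> R \<and> prod F A \<notin> P"
  using assms(4,5)
proof (induction A rule: finite_induct)
  case empty
  then show ?case
    using P \<open>1 \<in> R\<close> by (simp add: is_prime_ideal_in_def)
next
  case (insert x A)
  then have "F x \<in> R" "F x \<notin> P" "prod F A \<in> R" "prod F A \<notin> P"
    by auto
  then have "F x * prod F A \<in> R \<and> F x * prod F A \<notin> P"
    using P mult_closed unfolding is_prime_ideal_in_def by blast
  then show ?case
    using insert.hyps by simp
qed

lemma prime_ideal_power_mult_cancel:
  assumes P: "is_prime_ideal_in R P" and "1 \<in> R"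
    and mult_closed: "\<And>a b. a \<in> R \<Longrightarrow> b \<in> R \<Longrightarrow> a * b \<in> R"
    and h: "h \<in> R" "h \<notin> P" and "f \<in> R" "h ^ l * f \<in> P"
  shows "f \<in> P"
proof -
  have "h ^ l \<in> R \<and> h ^ l \<notin> P"
    using prime_ideal_prod_notin[OF P \<open>1 \<in> R\<close> mult_closed, of "{..<l}" "\<lambda>_. h"] h by simp
  then show ?thesis
    using assms(6,7) mult_closed P by (auto simp: is_prime_ideal_in_def)
qed

lemma Kx_prime_ideal_constant_eq_0:
  fixes g :: "'k::field dpoly"
  assumes P: "is_prime_ideal_in (Kx n m) P" and "g \<in> P" "vars g = {}"
  shows "g = 0"
proof (rule ccontr)
  assume "g \<noteq> 0"
  have g: "g = single 0 (lookup g 0)"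
    by (rule constant_eq_single_0[OF assms(3)])
  with \<open>g \<noteq> 0\<close> have "lookup g 0 \<noteq> 0"
    by (metis single_zero)
  then have "single 0 (inverse (lookup g 0)) * g = 1"
    by (subst g) (simp add: mult_single)
  moreover have "single 0 (inverse (lookup g 0)) \<in> Kx n m"
    by (simp add: Kx_eq_polys_in polys_in_single_0)
  then have "single 0 (inverse (lookup g 0)) * g \<in> P"
    using P \<open>g \<in> P\<close> unfolding is_prime_ideal_in_def is_ideal_in_def by blast
  ultimately show False
    using P by (simp add: is_prime_ideal_in_def)
qed

lemma dpow_mem_prime_diff_ideal:
  assumes "prime_diff_ideal n m D P" "f \<in> P" "length \<xi> = m"
  shows "dpow D \<xi> f \<in> P"
proof -
  have "(deriv_poly D k ^^ j) p \<in> P" if "k < m" "p \<in> P" for k j p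
    using that assms(1) by (induction j) (auto simp: prime_diff_ideal_def)
  then have "foldr (\<lambda>k. deriv_poly D k ^^ (\<xi> ! k)) ks f \<in> P" if "\<forall>k\<in>set ks. k < m" for ks
    using that assms(2) by (induction ks) auto
  then show ?thesis
    using assms(3) by (simp add: dpow_def)
qed

lemma mem_prolong_self:
  assumes "f \<in> \<Lambda>" "f \<in> Kx_le n m r"
  shows "f \<in> prolong n m D r \<Lambda>"
proof -
  have "foldr (\<lambda>k. deriv_poly D k ^^ (replicate m 0 ! k)) ks f = f" if "\<forall>k\<in>set ks. k < m" for ks
    using that by (induction ks) auto
  then have "f = dpow D (replicate m 0) f"
    by (simp add: dpow_def)
  then show ?thesis
    unfolding prolong_def using assms by force
qed


section \<open>Characteristic sets\<close>

lemma reduced_wrt_swap: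
  assumes f: "nonconstant f" "f \<in> Kx n m" and g: "nonconstant g" "g \<in> Kx n m"
    and rank: "\<not> rank_less (rank g) (rank f)" and red: "reduced_wrt g f"
  shows "reduced_wrt f g"
proof -
  have "leader f \<noteq> leader g"
    using rank red by (auto simp: rank_def rank_less_def reduced_wrt_def)
  moreover have "\<not> var_less (leader g) (leader f)"
    using rank by (simp add: rank_def rank_less_def)
  ultimately have "var_less (leader f) (leader g)"
    using var_less_linear valid_var_leader[OF f] valid_var_leader[OF g] by (metis valid_var_def)
  then have below: "var_less w (leader g)" if "w \<in> vars f" for w
    using var_le_leader[OF f that] var_le_less_trans by blast
  then have "\<forall>w\<in>vars f. \<not> proper_deriv_of w (leader g)"
    using proper_deriv_of_var_less var_less_asym by blast
  moreover have "deg_in (leader g) f = 0"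
    using below deg_in_eq_0_iff var_less_irrefl by blast
  ultimately show ?thesis
    using deg_in_leader_pos[OF g] by (simp add: reduced_wrt_def)
qed

lemma auto_less_takeWhile_snoc:
  "auto_less (takeWhile (\<lambda>f. \<not> rank_less (rank g) (rank f)) L @ [g]) L"
proof -
  let ?Q = "\<lambda>f. \<not> rank_less (rank g) (rank f)"
  let ?j = "length (takeWhile ?Q L)"
  show ?thesis
  proof (cases "?j < length L")
    case True
    then have "rank_less (rank g) (rank (L ! ?j))"
      using nth_length_takeWhile[of ?Q L] by simp
    then show ?thesis
      unfolding auto_less_def using True takeWhile_eq_take[of ?Q L]
      by (intro disjI1 exI[of _ ?j]) (auto simp: nth_append takeWhile_nth)
  next
    case False
    then have "takeWhile ?Q L = L"
      by (metis length_takeWhile_le le_antisym not_less takeWhile_eq_take take_all)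
    then show ?thesis
      unfolding auto_less_def by (subst (1 2 3) \<open>takeWhile ?Q L = L\<close>) (simp add: nth_append)
  qed
qed

lemma autoreduced_takeWhile_snoc:
  assumes L: "autoreduced L" "set L \<subseteq> Kx n m" and g: "nonconstant g" "g \<in> Kx n m"
    and red: "\<forall>f\<in>set L. reduced_wrt g f"
  shows "autoreduced (takeWhile (\<lambda>f. \<not> rank_less (rank g) (rank f)) L @ [g])"
proof -
  let ?Q = "\<lambda>f. \<not> rank_less (rank g) (rank f)"
  have in_L: "f \<in> set L" and Q: "?Q f" if "f \<in> set (takeWhile ?Q L)" for f
    using that set_takeWhileD by fastforce+
  have "g \<notin> set L"
    using red by (auto simp: reduced_wrt_def)
  moreover have "reduced_wrt h g" if "h \<in> set (takeWhile ?Q L)" for h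
    using reduced_wrt_swap[of h n m g] L g red in_L[OF that] Q[OF that] by (auto simp: autoreduced_def)
  moreover have "reduced_wrt g h" if "h \<in> set (takeWhile ?Q L)" for h
    using red in_L[OF that] by blast
  moreover have "distinct L" "\<forall>f\<in>set L. nonconstant f"
    "sorted_wrt (\<lambda>f g. \<not> rank_less (rank g) (rank f)) L"
    "\<forall>f\<in>set L. \<forall>g\<in>set L. f \<noteq> g \<longrightarrow> reduced_wrt g f"
    using L(1) by (auto simp: autoreduced_def)
  ultimately show ?thesis
    using g(1) in_L Q unfolding autoreduced_def by (simp add: sorted_wrt_append) blast
qed

lemma char_set_reduced_element_eq_0:
  fixes g :: "'k::field dpoly"
  assumes cs: "char_set L P" and P: "is_prime_ideal_in (Kx n m) P"
    and "g \<in> P" and red: "\<forall>f\<in>set L. reduced_wrt g f"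
  shows "g = 0"
proof (cases "vars g = {}")
  case True
  then show ?thesis
    using Kx_prime_ideal_constant_eq_0[OF P \<open>g \<in> P\<close>] by blast
next
  case False
  have "P \<subseteq> Kx n m"
    using P by (simp add: is_prime_ideal_in_def is_ideal_in_def)
  moreover have "autoreduced L" "set L \<subseteq> P"
    using cs by (auto simp: char_set_def)
  moreover have "nonconstant g"
    using False by (simp add: nonconstant_def)
  ultimately have "autoreduced (takeWhile (\<lambda>f. \<not> rank_less (rank g) (rank f)) L @ [g])"
    using autoreduced_takeWhile_snoc[of L n m g] \<open>g \<in> P\<close> red by blast
  moreover have "set (takeWhile (\<lambda>f. \<not> rank_less (rank g) (rank f)) L @ [g]) \<subseteq> P"
    using \<open>set L \<subseteq> P\<close> \<open>g \<in> P\<close> set_takeWhileD by fastforce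
  ultimately show ?thesis
    using cs auto_less_takeWhile_snoc unfolding char_set_def by blast
qed

lemma reduced_wrt_if_below:
  assumes "vars c \<subseteq> vars f" "\<And>u. deg_in u c \<le> deg_in u f" "reduced_wrt f f'"
  shows "reduced_wrt c f'"
proof -
  have "deg_in (leader f') c < deg_in (leader f') f'"
    using assms(2)[of "leader f'"] assms(3) by (simp add: reduced_wrt_def)
  then show ?thesis
    using assms(1,3) by (auto simp: reduced_wrt_def)
qed

lemma reduced_wrt_self_if_below:
  assumes f: "nonconstant f" "f \<in> Kx n m"
    and "vars c \<subseteq> vars f" "deg_in (leader f) c < deg_in (leader f) f"
  shows "reduced_wrt c f"
proof -
  have "\<not> proper_deriv_of w (leader f)" if "w \<in> vars f" for w
  proof
    assume "proper_deriv_of w (leader f)"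
    then have "var_less (leader f) w"
      by (rule proper_deriv_of_var_less)
    then show False
      using var_le_less_trans[OF var_le_leader[OF f that]] var_less_irrefl by blast
  qed
  then show ?thesis
    using assms(3,4) by (auto simp: reduced_wrt_def)
qed

lemma initial_reduced_wrt:
  assumes L: "autoreduced L" "set L \<subseteq> Kx n m" and "f \<in> set L" "f' \<in> set L"
  shows "reduced_wrt (initial f) f'"
proof (cases "f' = f")
  case True
  have f: "nonconstant f" "f \<in> Kx n m"
    using L \<open>f \<in> set L\<close> by (auto simp: autoreduced_def)
  have "vars (initial f) \<subseteq> vars f" "deg_in (leader f) (initial f) = 0"
    using vars_initial[of f] deg_in_eq_0_iff by blast+
  then show ?thesis
    using True reduced_wrt_self_if_below[OF f] deg_in_leader_pos[OF f] by simp
next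
  case False
  then have "reduced_wrt f f'"
    using L(1) assms(3,4) by (simp add: autoreduced_def)
  moreover have "vars (initial f) \<subseteq> vars f"
    using vars_initial by blast
  ultimately show ?thesis
    using deg_in_initial_le by (rule reduced_wrt_if_below[rotated 2])
qed

lemma separant_reduced_wrt:
  assumes L: "autoreduced L" "set L \<subseteq> Kx n m" and "f \<in> set L" "f' \<in> set L"
  shows "reduced_wrt (separant f) f'"
proof (cases "f' = f")
  case True
  have f: "nonconstant f" "f \<in> Kx n m"
    using L \<open>f \<in> set L\<close> by (auto simp: autoreduced_def)
  have "deg_in (leader f) (separant f) < deg_in (leader f) f"
    using deg_in_pderiv_var_self[of "leader f" f] deg_in_leader_pos[OF f] by (simp add: separant_def)
  then show ?thesis
    using True reduced_wrt_self_if_below[OF f vars_separant] by simp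
next
  case False
  then have "reduced_wrt f f'"
    using L(1) assms(3,4) by (simp add: autoreduced_def)
  then show ?thesis
    using vars_separant deg_in_separant_le by (rule reduced_wrt_if_below[rotated 2])
qed

lemma polys_in_initial: "f \<in> polys_in V \<Longrightarrow> initial f \<in> polys_in V"
  unfolding initial_def by (rule polys_in_coeff_in)

lemma polys_in_separant: "f \<in> polys_in V \<Longrightarrow> separant f \<in> polys_in V"
  using vars_separant by (fastforce simp: polys_in_def)

lemma polys_in_H_of: "\<Lambda> \<subseteq> polys_in V \<Longrightarrow> H_of \<Lambda> \<in> polys_in V"
  unfolding H_of_def by (auto intro!: polys_in_prod polys_in_mult polys_in_initial polys_in_separant)

lemma H_of_notin_prime:
  fixes L :: "'k::field_char_0 dpoly list"
  assumes cs: "char_set L P" and P: "is_prime_ideal_in (Kx n m) P"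
  shows "H_of (set L) \<notin> P"
proof -
  have L: "autoreduced L" "set L \<subseteq> Kx n m"
    using cs P by (auto simp: char_set_def is_prime_ideal_in_def is_ideal_in_def)
  have factor: "initial f * separant f \<in> Kx n m \<and> initial f * separant f \<notin> P" if "f \<in> set L" for f
  proof -
    have f: "nonconstant f" "f \<in> Kx n m"
      using L that by (auto simp: autoreduced_def)
    have "initial f \<notin> P" "separant f \<notin> P"
      using char_set_reduced_element_eq_0[OF cs P] initial_reduced_wrt[OF L that]
        separant_reduced_wrt[OF L that] initial_nonzero[OF f] separant_nonzero[OF f] by blast+
    moreover have "initial f \<in> Kx n m" "separant f \<in> Kx n m"
      using f(2) by (simp_all add: Kx_eq_polys_in polys_in_initial polys_in_separant)
    moreover have "initial f * separant f \<in> Kx n m"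
      using calculation(3,4) by (simp add: Kx_eq_polys_in polys_in_mult)
    ultimately show ?thesis
      using P unfolding is_prime_ideal_in_def by blast
  qed
  have "(\<Prod>f\<in>set L. initial f * separant f) \<in> Kx n m \<and> (\<Prod>f\<in>set L. initial f * separant f) \<notin> P"
    using factor by (intro prime_ideal_prod_notin[OF P]) (simp_all add: Kx_eq_polys_in polys_in_one polys_in_mult)
  then show ?thesis
    by (simp add: H_of_def)
qed

lemma H_of_factors:
  assumes "f \<in> set L" "set L \<subseteq> polys_in V"
  obtains c d where "c \<in> polys_in V" "H_of (set L) = initial f * c"
    and "d \<in> polys_in V" "H_of (set L) = separant f * d"
proof -
  let ?R = "\<Prod>g\<in>set L - {f}. initial g * separant g"
  have "H_of (set L) = initial f * separant f * ?R"
    unfolding H_of_def using prod.remove[OF finite_set assms(1)] by simp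
  then have "H_of (set L) = initial f * (separant f * ?R)" "H_of (set L) = separant f * (initial f * ?R)"
    by (simp_all add: ac_simps)
  moreover have "?R \<in> polys_in V" "initial f \<in> polys_in V" "separant f \<in> polys_in V"
    using assms by (auto intro!: polys_in_prod polys_in_mult polys_in_initial polys_in_separant)
  ultimately show ?thesis
    using that polys_in_mult by blast
qed


section \<open>Reduction modulo the prolongations\<close>

lemma pseudo_remainder_deg_in:
  fixes g c h0 :: "'k::comm_ring_1 dpoly"
  assumes e: "1 \<le> e" "e \<le> d" and g: "deg_in w g \<le> d"
    and c: "w \<notin> vars c" and h0: "deg_in w h0 \<le> e - 1"
  defines "g' \<equiv> c * g - coeff_in w d g * var_pow w (d - e) * (c * var_pow w e + h0)"
  shows "deg_in w g' \<le> d - 1"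
    and "u \<noteq> w \<Longrightarrow> u \<notin> vars c \<Longrightarrow> u \<notin> vars h0 \<Longrightarrow> deg_in u g' \<le> deg_in u g"
proof -
  let ?C = "coeff_in w d g"
  have "var_pow w (d - e) * var_pow w e = (var_pow w d :: 'k dpoly)"
    using var_pow_mult[of w "d - e" e] e by simp
  then have g': "g' = c * reductum w d g - ?C * var_pow w (d - e) * h0"
    unfolding g'_def reductum_def by (simp add: algebra_simps)
  have deg_c: "deg_in w c = 0" and deg_C: "deg_in w ?C = 0"
    using c vars_coeff_in[of w d g] by (auto simp: deg_in_eq_0_iff)
  have "deg_in w (c * reductum w d g) \<le> d - 1"
    using deg_in_mult_le[of w c "reductum w d g"] deg_c deg_in_reductum_less[OF g] by linarith
  moreover have "deg_in w (?C * var_pow w (d - e) * h0) \<le> d - 1"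
    using deg_in_mult_le[of w "?C * var_pow w (d - e)" h0] deg_in_mult_le[of w ?C "var_pow w (d - e)"]
      deg_C deg_in_var_pow_le[of w "d - e", where 'k = 'k] h0 e by linarith
  ultimately show "deg_in w g' \<le> d - 1"
    unfolding g' by (intro order_trans[OF deg_in_diff_le]) simp
  assume u: "u \<noteq> w" "u \<notin> vars c" "u \<notin> vars h0"
  then have "deg_in u c = 0" "deg_in u h0 = 0" "deg_in u (var_pow w (d - e) :: 'k dpoly) = 0"
    using vars_var_pow[of w "d - e"] by (auto simp: deg_in_eq_0_iff)
  then have "deg_in u (c * reductum w d g) \<le> deg_in u g"
    and "deg_in u (?C * var_pow w (d - e) * h0) \<le> deg_in u g"
    using deg_in_mult_le[of u c "reductum w d g"] deg_in_reductum_le[of u w d g]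
      deg_in_mult_le[of u "?C * var_pow w (d - e)" h0] deg_in_mult_le[of u ?C "var_pow w (d - e)"]
      deg_in_coeff_in_le[of u w d g] by linarith+
  then show "deg_in u g' \<le> deg_in u g"
    unfolding g' by (intro order_trans[OF deg_in_diff_le]) simp
qed

lemma pseudo_reduction_step:
  fixes g h c h0 c' :: "'k::comm_ring_1 dpoly"
  assumes I: "is_ideal_in (polys_in U) I" and "V \<subseteq> U"
    and g: "g \<in> polys_in V" "g \<in> I" and w: "w \<in> V"
    and e: "1 \<le> e" "e \<le> deg_in w g"
    and h: "h = c * var_pow w e + h0" "w \<notin> vars c" "deg_in w h0 \<le> e - 1"
    and above: "\<And>u. var_less w u \<Longrightarrow> u \<notin> vars c \<and> u \<notin> vars h0"
    and mem: "c \<in> polys_in V" "h \<in> polys_in V" "h \<in> I" "h \<in> S"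
    and H: "c' \<in> polys_in V" "H = c * c'"
  obtains g' where "g' \<in> polys_in V" "g' \<in> I" "H * g - c' * g' \<in> gen_ideal (polys_in V) S"
    "deg_in w g' < deg_in w g" "\<And>u. var_less w u \<Longrightarrow> deg_in u g' \<le> deg_in u g"
proof -
  let ?d = "deg_in w g"
  let ?Q = "coeff_in w ?d g * var_pow w (?d - e)"
  define g' where "g' = c * g - ?Q * h"
  have "?Q \<in> polys_in V"
    using g(1) w by (intro polys_in_mult polys_in_coeff_in polys_in_var_pow)
  then have "g' \<in> polys_in V" "c' * ?Q \<in> polys_in V"
    using g(1) mem(1,2) H(1) by (simp_all add: g'_def polys_in_mult polys_in_diff)
  moreover have "polys_in V \<subseteq> polys_in U"
    using \<open>V \<subseteq> U\<close> by (auto simp: polys_in_def)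
  then have "g' \<in> I"
    unfolding g'_def using I g mem \<open>?Q \<in> polys_in V\<close>
    by (intro is_ideal_in_diff[OF I polys_in_minus_one]) (auto simp: is_ideal_in_def)
  moreover have "H * g - c' * g' = (c' * ?Q) * h"
    unfolding g'_def H(2) by (simp add: algebra_simps)
  then have "H * g - c' * g' \<in> gen_ideal (polys_in V) S"
    using gen_ideal_generator_mult[OF \<open>c' * ?Q \<in> polys_in V\<close> mem(4)] by simp
  moreover have "deg_in w g' < ?d"
    using pseudo_remainder_deg_in(1)[OF e order_refl h(2,3)] e unfolding g'_def h(1) by linarith
  moreover have "deg_in u g' \<le> deg_in u g" if "var_less w u" for u
    using pseudo_remainder_deg_in(2)[OF e order_refl h(2,3)] above[OF that] var_less_irrefl[of w] that
    unfolding g'_def h(1) by metis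
  ultimately show ?thesis
    using that by blast
qed

definition reducible_vars :: "'k::zero dpoly list \<Rightarrow> 'k dpoly \<Rightarrow> dvar set" where
  "reducible_vars L g = {u \<in> vars g. \<exists>f\<in>set L.
     proper_deriv_of u (leader f) \<or> u = leader f \<and> deg_in u f \<le> deg_in u g}"

lemma reduced_if_reducible_vars_empty:
  assumes "reducible_vars L g = {}" "f \<in> set L" "nonconstant f" "f \<in> Kx n m"
  shows "reduced_wrt g f"
proof -
  have "\<forall>w\<in>vars g. \<not> proper_deriv_of w (leader f)"
    using assms(1,2) unfolding reducible_vars_def by blast
  moreover have "deg_in (leader f) g < deg_in (leader f) f"
  proof (rule ccontr)
    assume "\<not> ?thesis"
    then have "deg_in (leader f) f \<le> deg_in (leader f) g"
      by simp
    moreover from this have "leader f \<in> vars g"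
      using deg_in_leader_pos[OF assms(3,4)] deg_in_eq_0_iff[of "leader f" g] by linarith
    ultimately have "leader f \<in> reducible_vars L g"
      using assms(2) unfolding reducible_vars_def by blast
    then show False
      using assms(1) by blast
  qed
  ultimately show ?thesis
    by (simp add: reduced_wrt_def)
qed

definition var_index :: "dvar set \<Rightarrow> dvar \<Rightarrow> nat" where
  "var_index V u = card {t \<in> V. var_less t u}"

lemma var_index_less:
  assumes "finite V" "t \<in> V" "var_less t u"
  shows "var_index V t < var_index V u"
proof -
  have "{s \<in> V. var_less s t} \<subset> {s \<in> V. var_less s u}"
    using assms var_less_trans var_less_irrefl by blast
  then show ?thesis
    unfolding var_index_def using assms(1) by (simp add: psubset_card_mono)
qed

lemma var_index_inj:
  assumes V: "finite V" "\<forall>v\<in>V. length (snd v) = m"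
    and "t \<in> V" "u \<in> V" "var_index V t = var_index V u"
  shows "t = u"
  using var_less_linear[of t u] var_index_less[OF V(1), of t u] var_index_less[OF V(1), of u t] assms
  by fastforce

definition greatest_var :: "dvar set \<Rightarrow> dvar set \<Rightarrow> dvar" where
  "greatest_var V A = (SOME u. u \<in> A \<and> var_index V u = Max (var_index V ` A))"

lemma greatest_var:
  assumes V: "finite V" "\<forall>v\<in>V. length (snd v) = m" and A: "A \<subseteq> V" "A \<noteq> {}"
  shows greatest_var_in: "greatest_var V A \<in> A"
    and var_index_greatest_var: "var_index V (greatest_var V A) = Max (var_index V ` A)"
    and var_le_greatest_var: "u \<in> A \<Longrightarrow> var_le u (greatest_var V A)"
proof -
  have fin: "finite A"
    using A(1) V(1) finite_subset by blast
  then have "Max (var_index V ` A) \<in> var_index V ` A"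
    using A(2) by simp
  then have "\<exists>u. u \<in> A \<and> var_index V u = Max (var_index V ` A)"
    by force
  then show top: "greatest_var V A \<in> A" "var_index V (greatest_var V A) = Max (var_index V ` A)"
    unfolding greatest_var_def by (metis (mono_tags, lifting) someI_ex)+
  assume "u \<in> A"
  then have "var_index V u \<le> var_index V (greatest_var V A)"
    using fin top(2) by simp
  then have "\<not> var_less (greatest_var V A) u"
    using var_index_less[OF V(1), of "greatest_var V A" u] top(1) A(1) by fastforce
  moreover have "u \<in> V" "greatest_var V A \<in> V"
    using top(1) \<open>u \<in> A\<close> A(1) by blast+
  then have "length (snd u) = length (snd (greatest_var V A))"
    using V(2) by simp
  ultimately show "var_le u (greatest_var V A)"
    using not_var_less_imp_var_le by blast
qed

definition reduction_measure :: "dvar set \<Rightarrow> 'k::zero dpoly list \<Rightarrow> 'k dpoly \<Rightarrow> nat \<times> nat" where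
  "reduction_measure V L g = (if reducible_vars L g = {} then (0, 0) else
     (Suc (Max (var_index V ` reducible_vars L g)), deg_in (greatest_var V (reducible_vars L g)) g))"

lemma reducible_vars_after_reduction:
  assumes V: "finite V" "\<forall>v\<in>V. length (snd v) = m" and "vars g \<subseteq> V" "vars g' \<subseteq> V"
    and ne: "reducible_vars L g \<noteq> {}" and w: "w = greatest_var V (reducible_vars L g)"
    and du: "\<And>u. var_less w u \<Longrightarrow> deg_in u g' \<le> deg_in u g"
    and u: "u \<in> reducible_vars L g'"
  shows "var_le u w"
proof (rule ccontr)
  assume "\<not> var_le u w"
  have A: "reducible_vars L g \<subseteq> V"
    using assms(3) by (auto simp: reducible_vars_def)
  then have "w \<in> V" "u \<in> V"
    using greatest_var_in[OF V A ne] w u assms(4) by (auto simp: reducible_vars_def)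
  moreover from this have "length (snd u) = length (snd w)"
    using V(2) by simp
  ultimately have "var_less w u"
    using \<open>\<not> var_le u w\<close> not_var_less_imp_var_le by blast
  then have le: "deg_in u g' \<le> deg_in u g"
    by (rule du)
  then have "u \<in> vars g"
    using u deg_in_eq_0_iff[of u g'] deg_in_eq_0_iff[of u g] by (auto simp: reducible_vars_def)
  then have "u \<in> reducible_vars L g"
    using u le order_trans by (fastforce simp: reducible_vars_def)
  then show False
    using var_le_greatest_var[OF V A ne] w \<open>\<not> var_le u w\<close> by blast
qed

lemma reduction_measure_decreases:
  assumes V: "finite V" "\<forall>v\<in>V. length (snd v) = m" and "vars g \<subseteq> V" "vars g' \<subseteq> V"
    and ne: "reducible_vars L g \<noteq> {}" and w: "w = greatest_var V (reducible_vars L g)"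
    and "deg_in w g' < deg_in w g" and "\<And>u. var_less w u \<Longrightarrow> deg_in u g' \<le> deg_in u g"
  shows "(reduction_measure V L g', reduction_measure V L g) \<in> less_than <*lex*> less_than"
proof -
  let ?A = "reducible_vars L g" and ?A' = "reducible_vars L g'"
  have A: "?A \<subseteq> V" "?A' \<subseteq> V"
    using assms(3,4) by (auto simp: reducible_vars_def)
  have "w \<in> ?A" and w_index: "var_index V w = Max (var_index V ` ?A)"
    using greatest_var_in[OF V A(1) ne] var_index_greatest_var[OF V A(1) ne] w by simp_all
  then have "w \<in> V"
    using A(1) by blast
  have below: "var_le u w" if "u \<in> ?A'" for u
    using reducible_vars_after_reduction[OF V assms(3,4) ne w assms(8) that] .
  show ?thesis
  proof (cases "?A' = {}")
    case True
    then show ?thesis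
      using ne by (simp add: reduction_measure_def)
  next
    case False
    have index_le: "var_index V u \<le> var_index V w" if "u \<in> ?A'" for u
      using below[OF that] var_index_less[OF V(1), of u w] that A(2) by (auto simp: var_le_def)
    moreover have "finite ?A'"
      using A(2) V(1) finite_subset by blast
    ultimately have "Max (var_index V ` ?A') \<le> var_index V w"
      using False by (subst Max_le_iff) auto
    moreover have "greatest_var V ?A' = w" if "Max (var_index V ` ?A') = var_index V w"
    proof (rule var_index_inj[OF V])
      show "greatest_var V ?A' \<in> V"
        using greatest_var_in[OF V A(2) False] A(2) by blast
      show "var_index V (greatest_var V ?A') = var_index V w"
        using var_index_greatest_var[OF V A(2) False] that by simp
    qed (rule \<open>w \<in> V\<close>)
    ultimately show ?thesis
      using ne False w_index assms(7) unfolding reduction_measure_def w[symmetric]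
      by (cases "Max (var_index V ` ?A') = var_index V w") auto
  qed
qed

locale low_order_char_set =
  fixes n m r :: nat and D :: "nat \<Rightarrow> 'k::field_char_0 \<Rightarrow> 'k"
    and P :: "'k dpoly set" and L :: "'k dpoly list"
  assumes prime_diff_ideal: "prime_diff_ideal n m D P"
    and char_set: "char_set L P"
    and low_order: "set L \<subseteq> Kx_le n m r"
begin

lemma P_prime: "is_prime_ideal_in (Kx n m) P"
  using prime_diff_ideal by (simp add: prime_diff_ideal_def)

lemma P_ideal: "is_ideal_in (polys_in {v. valid_var n m v}) P"
  using P_prime by (simp add: is_prime_ideal_in_def Kx_eq_polys_in)

lemma mem_L:
  assumes "f \<in> set L"
  shows "nonconstant f" "f \<in> Kx n m" "f \<in> polys_in (bounded_vars n m r)" "f \<in> P"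
proof -
  show "nonconstant f" "f \<in> P"
    using assms char_set by (auto simp: char_set_def autoreduced_def)
  show "f \<in> polys_in (bounded_vars n m r)"
    using assms low_order by (auto simp: Kx_le_eq_polys_in)
  then show "f \<in> Kx n m"
    using Kx_le_subset_Kx by (auto simp: Kx_le_eq_polys_in)
qed

lemma proper_derivative_reducer:
  assumes f: "f \<in> set L" and w: "w \<in> bounded_vars n m r" "proper_deriv_of w (leader f)"
  obtains h T where "h = separant f * var_pow w 1 + T" "vars T \<subseteq> {t. var_less t w}"
    "h \<in> polys_in (bounded_vars n m r)" "h \<in> P" "h \<in> prolong n m D r (set L)"
proof -
  have "valid_var n m w"
    using w(1) by (simp add: bounded_vars_def)
  then obtain \<xi> where \<xi>: "length \<xi> = m" "linear_in n m (separant f) w (dpow D \<xi> f)"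
    by (rule dpow_linear_in_proper_derivative[OF mem_L(1,2)[OF f] _ w(2)])
  then obtain T where T: "dpow D \<xi> f = separant f * var_pow w 1 + T"
    "vars T \<subseteq> {t. var_less t w \<and> valid_var n m t}"
    by (auto simp: linear_in_def)
  have "vars (separant f) \<subseteq> bounded_vars n m r"
    using mem_L(3)[OF f] vars_separant by (fastforce simp: polys_in_def)
  moreover have "{t. var_le t w \<and> valid_var n m t} \<subseteq> bounded_vars n m r"
    using w(1) var_le_imp_sum_list_le by (fastforce simp: bounded_vars_def)
  ultimately have "dpow D \<xi> f \<in> polys_in (bounded_vars n m r)"
    using vars_linear_in[OF \<xi>(2)] w(1) by (auto simp: polys_in_def)
  moreover have "dpow D \<xi> f \<in> P"
    using dpow_mem_prime_diff_ideal[OF prime_diff_ideal mem_L(4)[OF f] \<xi>(1)] .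
  moreover have "dpow D \<xi> f \<in> prolong n m D r (set L)"
    using f \<xi>(1) calculation(1) by (auto simp: prolong_def Kx_le_eq_polys_in)
  ultimately show ?thesis
    using that T by blast
qed

abbreviation I :: "'k dpoly set" where
  "I \<equiv> gen_ideal (Kx_le n m r) (prolong n m D r (set L))"

abbreviation H :: "'k dpoly" where
  "H \<equiv> H_of (set L)"

lemma reduction_step_proper_derivative:
  assumes g: "g \<in> Kx_le n m r" "g \<in> P" and f: "f \<in> set L"
    and w: "w \<in> vars g" "proper_deriv_of w (leader f)"
  obtains g' c' where "g' \<in> Kx_le n m r" "g' \<in> P" "c' \<in> Kx_le n m r" "H * g - c' * g' \<in> I"
    "deg_in w g' < deg_in w g" "\<And>u. var_less w u \<Longrightarrow> deg_in u g' \<le> deg_in u g"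
proof -
  have w_bounded: "w \<in> bounded_vars n m r"
    using g(1) w(1) by (auto simp: Kx_le_eq_polys_in polys_in_def)
  obtain h T where h: "h = separant f * var_pow w 1 + T" "vars T \<subseteq> {t. var_less t w}"
    "h \<in> polys_in (bounded_vars n m r)" "h \<in> P" "h \<in> prolong n m D r (set L)"
    using proper_derivative_reducer[OF f w_bounded w(2)] by blast
  obtain c' where c': "c' \<in> polys_in (bounded_vars n m r)" "H = separant f * c'"
    using H_of_factors[OF f] low_order by (metis Kx_le_eq_polys_in)
  have separant_below: "var_less t w" if "t \<in> vars (separant f)" for t
    using that vars_separant var_le_leader[OF mem_L(1,2)[OF f]]
      var_le_less_trans[OF _ proper_deriv_of_var_less[OF w(2)]] by blast
  have "g \<in> polys_in (bounded_vars n m r)"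
    using g(1) by (simp add: Kx_le_eq_polys_in)
  moreover have "1 \<le> deg_in w g"
    using w(1) deg_in_eq_0_iff[of w g] by linarith
  moreover have "w \<notin> vars (separant f)"
    using separant_below var_less_irrefl by blast
  moreover have "w \<notin> vars T"
    using h(2) var_less_irrefl by blast
  then have "deg_in w T \<le> 1 - 1"
    by (simp add: deg_in_eq_0_iff)
  moreover have "u \<notin> vars (separant f) \<and> u \<notin> vars T" if "var_less w u" for u
    using that separant_below h(2) var_less_asym by blast
  moreover have "separant f \<in> polys_in (bounded_vars n m r)"
    using mem_L(3)[OF f] by (rule polys_in_separant)
  ultimately obtain g' where "g' \<in> polys_in (bounded_vars n m r)" "g' \<in> P"
    "H * g - c' * g' \<in> gen_ideal (polys_in (bounded_vars n m r)) (prolong n m D r (set L))"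
    "deg_in w g' < deg_in w g" "\<And>u. var_less w u \<Longrightarrow> deg_in u g' \<le> deg_in u g"
    using pseudo_reduction_step[OF P_ideal bounded_vars_valid _ g(2) w_bounded order_refl _ h(1) _ _ _ _
        h(3-5) c'] by blast
  then show ?thesis
    using that c'(1) by (simp add: Kx_le_eq_polys_in)
qed

lemma reduction_step_leader:
  assumes g: "g \<in> Kx_le n m r" "g \<in> P" and f: "f \<in> set L"
    and w: "w = leader f" "deg_in w f \<le> deg_in w g"
  obtains g' c' where "g' \<in> Kx_le n m r" "g' \<in> P" "c' \<in> Kx_le n m r" "H * g - c' * g' \<in> I"
    "deg_in w g' < deg_in w g" "\<And>u. var_less w u \<Longrightarrow> deg_in u g' \<le> deg_in u g"
proof -
  let ?e = "deg_in w f"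
  have f_elt: "nonconstant f" "f \<in> Kx n m" "f \<in> polys_in (bounded_vars n m r)" "f \<in> P"
    using mem_L[OF f] by blast+
  obtain c' where c': "c' \<in> polys_in (bounded_vars n m r)" "H = initial f * c'"
    using H_of_factors[OF f] low_order by (metis Kx_le_eq_polys_in)
  have "g \<in> polys_in (bounded_vars n m r)"
    using g(1) by (simp add: Kx_le_eq_polys_in)
  moreover have "1 \<le> ?e"
    using deg_in_leader_pos[OF f_elt(1,2)] w(1) by simp
  moreover have "w \<in> bounded_vars n m r"
    using leader_in_vars[OF f_elt(1,2)] f_elt(3) w(1) by (auto simp: polys_in_def)
  moreover have "f = initial f * var_pow w ?e + reductum w ?e f"
    unfolding initial_def w(1) by (rule reductum_decomp)
  moreover have "w \<notin> vars (initial f)"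
    using vars_initial w(1) by blast
  moreover have "deg_in w (reductum w ?e f) \<le> ?e - 1"
    by (rule deg_in_reductum_less) simp
  moreover have "u \<notin> vars (initial f) \<and> u \<notin> vars (reductum w ?e f)" if "var_less w u" for u
  proof -
    have "u \<notin> vars f"
      using that w(1) var_le_leader[OF f_elt(1,2)] var_less_asym var_le_def by metis
    then show ?thesis
      using vars_initial vars_reductum by blast
  qed
  moreover have "f \<in> prolong n m D r (set L)"
    using f f_elt(3) by (intro mem_prolong_self) (simp_all add: Kx_le_eq_polys_in)
  ultimately obtain g' where "g' \<in> polys_in (bounded_vars n m r)" "g' \<in> P"
    "H * g - c' * g' \<in> gen_ideal (polys_in (bounded_vars n m r)) (prolong n m D r (set L))"
    "deg_in w g' < deg_in w g" "\<And>u. var_less w u \<Longrightarrow> deg_in u g' \<le> deg_in u g"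
    using pseudo_reduction_step[OF P_ideal bounded_vars_valid _ g(2) _ _ w(2)]
      polys_in_initial[OF f_elt(3)] f_elt(3,4) c' by blast
  then show ?thesis
    using that c'(1) by (simp add: Kx_le_eq_polys_in)
qed

lemma reduction_step:
  assumes "g \<in> Kx_le n m r" "g \<in> P" "w \<in> reducible_vars L g"
  obtains g' c' where "g' \<in> Kx_le n m r" "g' \<in> P" "c' \<in> Kx_le n m r" "H * g - c' * g' \<in> I"
    "deg_in w g' < deg_in w g" "\<And>u. var_less w u \<Longrightarrow> deg_in u g' \<le> deg_in u g"
  using assms reduction_step_proper_derivative reduction_step_leader
  unfolding reducible_vars_def by blast

lemma reduction_step_decreasing:
  assumes g: "g \<in> Kx_le n m r" "g \<in> P" and ne: "reducible_vars L g \<noteq> {}"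
  obtains g1 c' where "g1 \<in> Kx_le n m r" "g1 \<in> P" "c' \<in> Kx_le n m r" "H * g - c' * g1 \<in> I"
    "(reduction_measure (bounded_vars n m r) L g1, reduction_measure (bounded_vars n m r) L g)
       \<in> less_than <*lex*> less_than"
proof -
  let ?V = "bounded_vars n m r"
  let ?w = "greatest_var ?V (reducible_vars L g)"
  have V: "finite ?V" "\<forall>v\<in>?V. length (snd v) = m"
    using finite_bounded_vars by (auto simp: bounded_vars_def valid_var_def)
  have vars_g: "vars g \<subseteq> ?V"
    using g(1) by (simp add: Kx_le_eq_polys_in polys_in_def)
  then have "?w \<in> reducible_vars L g"
    using greatest_var_in[OF V _ ne] by (auto simp: reducible_vars_def)
  then obtain g1 c' where g1: "g1 \<in> Kx_le n m r" "g1 \<in> P" "c' \<in> Kx_le n m r" "H * g - c' * g1 \<in> I"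
    "deg_in ?w g1 < deg_in ?w g" "\<And>u. var_less ?w u \<Longrightarrow> deg_in u g1 \<le> deg_in u g"
    using reduction_step g by blast
  moreover have "vars g1 \<subseteq> ?V"
    using g1(1) by (simp add: Kx_le_eq_polys_in polys_in_def)
  ultimately show ?thesis
    using that reduction_measure_decreases[OF V vars_g _ ne refl g1(5,6)] by blast
qed

lemma reduce_to_reduced:
  assumes "g \<in> Kx_le n m r" "g \<in> P"
  shows "\<exists>g' a l. g' \<in> Kx_le n m r \<and> g' \<in> P \<and> a \<in> Kx_le n m r \<and>
    H ^ l * g - a * g' \<in> I \<and> (\<forall>f\<in>set L. reduced_wrt g' f)"
  using assms
proof (induction g rule: wf_induct[OF wf_inv_image[OF wf_lex_prod[OF wf_less_than wf_less_than],
      of "reduction_measure (bounded_vars n m r) L"]])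
  case (1 g)
  have closed: "\<And>a b. a \<in> Kx_le n m r \<Longrightarrow> b \<in> Kx_le n m r \<Longrightarrow> a * b \<in> (Kx_le n m r :: 'k dpoly set)"
    by (simp add: Kx_le_eq_polys_in polys_in_mult)
  show ?case
  proof (cases "reducible_vars L g = {}")
    case True
    then have "\<forall>f\<in>set L. reduced_wrt g f"
      using reduced_if_reducible_vars_empty mem_L(1,2) by blast
    then show ?thesis
      using "1.prems" gen_ideal_zero[of "Kx_le n m r"] by (intro exI[of _ g] exI[of _ 1] exI[of _ 0])
        (simp add: Kx_le_eq_polys_in polys_in_one)
  next
    case False
    then obtain g1 c' where g1: "g1 \<in> Kx_le n m r" "g1 \<in> P" "c' \<in> Kx_le n m r" "H * g - c' * g1 \<in> I"
      "(reduction_measure (bounded_vars n m r) L g1, reduction_measure (bounded_vars n m r) L g)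
         \<in> less_than <*lex*> less_than"
      using reduction_step_decreasing "1.prems" by blast
    then obtain g2 a l where g2: "g2 \<in> Kx_le n m r" "g2 \<in> P" "a \<in> Kx_le n m r"
      "H ^ l * g1 - a * g2 \<in> I" "\<forall>f\<in>set L. reduced_wrt g2 f"
      using "1.IH" by auto
    have "H \<in> Kx_le n m r"
      using low_order by (simp add: Kx_le_eq_polys_in polys_in_H_of)
    then have "H ^ Suc l * g - (c' * a) * g2 \<in> I"
      using gen_ideal_power_mult_chain[OF closed _ g1(3,4) g2(4)] by blast
    moreover have "c' * a \<in> Kx_le n m r"
      using closed g1(3) g2(3) by blast
    ultimately show ?thesis
      using g2 by blast
  qed
qed

lemma inter_subset_saturation: "P \<inter> Kx_le n m r \<subseteq> saturation (Kx_le n m r) I H"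
proof
  fix f assume f: "f \<in> P \<inter> Kx_le n m r"
  then obtain g' a l where "g' \<in> P" "H ^ l * f - a * g' \<in> I" "\<forall>f\<in>set L. reduced_wrt g' f"
    using reduce_to_reduced by blast
  moreover from this have "g' = 0"
    by (intro char_set_reduced_element_eq_0[OF char_set P_prime])
  ultimately show "f \<in> saturation (Kx_le n m r) I H"
    using f by (auto simp: saturation_def)
qed

lemma saturation_subset_inter: "saturation (Kx_le n m r) I H \<subseteq> P \<inter> Kx_le n m r"
proof
  fix f assume "f \<in> saturation (Kx_le n m r) I H"
  then obtain l where f: "f \<in> Kx_le n m r" "H ^ l * f \<in> I"
    by (auto simp: saturation_def)
  have "prolong n m D r (set L) \<subseteq> P"
    using dpow_mem_prime_diff_ideal[OF prime_diff_ideal] mem_L(4) by (auto simp: prolong_def)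
  then have "I \<subseteq> P"
    using P_prime Kx_le_subset_Kx[of n m r] by (intro gen_ideal_subset) (auto simp: is_prime_ideal_in_def)
  moreover have "H \<in> Kx_le n m r"
    using polys_in_H_of low_order by (simp add: Kx_le_eq_polys_in)
  then have "H \<in> Kx n m"
    using Kx_le_subset_Kx by blast
  ultimately have "f \<in> P"
    using prime_ideal_power_mult_cancel[OF P_prime _ _ _ H_of_notin_prime[OF char_set P_prime]]
      f Kx_le_subset_Kx polys_in_one polys_in_mult unfolding Kx_eq_polys_in by blast
  then show "f \<in> P \<inter> Kx_le n m r"
    using f(1) by blast
qed

end

theorem lemma4p12:
  fixes n m r :: nat and D :: "nat \<Rightarrow> 'k::field_char_0 \<Rightarrow> 'k"
    and P :: "'k dpoly set" and L :: "'k dpoly list"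
  assumes "diff_field m D"
    and "prime_diff_ideal n m D P"
    and "char_set L P"
    and "set L \<subseteq> Kx_le n m r"
  shows "P \<inter> Kx_le n m r =
         saturation (Kx_le n m r) (gen_ideal (Kx_le n m r) (prolong n m D r (set L))) (H_of (set L))"
proof -
  interpret low_order_char_set n m r D P L
    using assms(2-4) by unfold_locales
  show ?thesis
    using inter_subset_saturation saturation_subset_inter by (rule equalityI)
qed

end
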